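(* Let $K\ge1$, let $(p_1,\dots,p_K)$ and $(q_1,\dots,q_K)$ be probability vectors, let $\Pi_1,\dots,\Pi_K$ be arbitrary probability distributions on $\mathcal{X}^1\times\mathcal{Y}$, and let $\alpha\in(0,1)$. Let $P$ be the distribution of $(X,Y)=(X^0,X^1,Y)$ given by $X^0\sim\textnormal{Multinomial}(p_1,\dots,p_K)$ and $(X^1,Y)\mid X^0=k\sim\Pi_k$, and let $Q$ be defined in the same way with $q_1,\dots,q_K$ in place of $p_1,\dots,p_K$. Suppose $(X_1,Y_1),\dots,(X_n,Y_n)$ are i.i.d. from $P$ and $(X_{n+1},Y_{n+1})$ is drawn from $Q$ independently of them. Let $s:\mathcal{X}\times\mathcal{Y}\to\mathbb{R}$ be any fixed measurable score function and let $\widehat{C}_n$ be the GWCP prediction set defined in the context, with $n_k=\sum_{i\le n}\mathbf{1}\{X_i^0=k\}$. Then \[\mathbb{P}\left\{Y_{n+1}\in\widehat{C}_n(X_{n+1})\right\}\ \ge\ 1-\alpha-\mathbb{E}\left[\max_{k:\,n_k>0}\{q_k/n_k\}\right].\] In particular, if $\min_k p_k\ge\frac{8\log n}{n}$, then \[\mathbb{P}\left\{Y_{n+1}\in\widehat{C}_n(X_{n+1})\right\}\ \ge\ 1-\alpha-4n^{-1}\max_k\{q_k/p_k\}.\]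
   Context: Features are $x=(x^0,x^1)\in\mathcal{X}=[K]\times\mathcal{X}^1$, where $x^0\in[K]=\{1,\dots,K\}$ is the group label. For a probability distribution $\mu$ on $\mathbb{R}\cup\{+\infty\}$ and $\tau\in(0,1]$, $\textnormal{Quantile}_{\tau}(\mu)=\inf\{t\in\mathbb{R}\cup\{+\infty\}:\mu([-\infty,t])\ge\tau\}$; $\delta_s$ denotes the point mass at $s$. Given calibration data, set $s_i=s(X_i,Y_i)$, $n_k=\sum_{i\le n}\mathbf{1}\{X_i^0=k\}$, and $\widehat{P}^{(k)}_{\textnormal{score}}=\frac{1}{n_k}\sum_{i\le n:\,X_i^0=k}\delta_{s_i}$ if $n_k>0$, while $\widehat{P}^{(k)}_{\textnormal{score}}=\delta_{+\infty}$ if $n_k=0$. The GWCP prediction set is $\widehat{C}_n(x)=\{y\in\mathcal{Y}: s(x,y)\le\widehat{q}\}$ with $\widehat{q}=\textnormal{Quantile}_{1-\alpha}\big(\sum_{k=1}^K q_k\widehat{P}^{(k)}_{\textnormal{score}}\big)$. *)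

theory Defs
  imports "HOL-Probability.Probability"
begin

definition grp_count :: "nat \<Rightarrow> (nat \<Rightarrow> nat) \<Rightarrow> nat \<Rightarrow> nat" where
  "grp_count n g k = card {i \<in> {1..n}. g i = k}"

text \<open>The (finitely supported) probability distribution
  sum_k q_k Phat^(k)_score on the extended reals, given as a set function:
  Phat^(k) is the empirical distribution of the scores in group k, or the
  point mass at +infinity if group k is empty.\<close>
definition gwcp_mixture ::
  "nat \<Rightarrow> (nat \<Rightarrow> real) \<Rightarrow> nat \<Rightarrow> (nat \<Rightarrow> nat) \<Rightarrow> (nat \<Rightarrow> real) \<Rightarrow> ereal set \<Rightarrow> real" where
  "gwcp_mixture K q n g sc A =
     (\<Sum>k\<in>{1..K}. q k *
        (if grp_count n g k > 0
         then real (card {i \<in> {1..n}. g i = k \<and> ereal (sc i) \<in> A}) / real (grp_count n g k)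
         else (if \<infinity> \<in> A then 1 else 0)))"

definition quantile :: "real \<Rightarrow> (ereal set \<Rightarrow> real) \<Rightarrow> ereal" where
  "quantile \<tau> \<mu> = Inf {t. t \<noteq> -\<infinity> \<and> \<mu> {..t} \<ge> \<tau>}"

text \<open>GWCP threshold and prediction set; D i = ((X_i^0, X_i^1), Y_i) are the calibration data.\<close>
definition gwcp_qhat ::
  "((nat \<times> 'x) \<times> 'y \<Rightarrow> real) \<Rightarrow> nat \<Rightarrow> (nat \<Rightarrow> real) \<Rightarrow> real \<Rightarrow> nat \<Rightarrow> (nat \<Rightarrow> (nat \<times> 'x) \<times> 'y) \<Rightarrow> ereal" where
  "gwcp_qhat s K q \<alpha> n D =
     quantile (1 - \<alpha>) (gwcp_mixture K q n (\<lambda>i. fst (fst (D i))) (\<lambda>i. s (D i)))"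

definition gwcp_set ::
  "((nat \<times> 'x) \<times> 'y \<Rightarrow> real) \<Rightarrow> nat \<Rightarrow> (nat \<Rightarrow> real) \<Rightarrow> real \<Rightarrow> nat \<Rightarrow> (nat \<Rightarrow> (nat \<times> 'x) \<times> 'y)
    \<Rightarrow> nat \<times> 'x \<Rightarrow> 'y set" where
  "gwcp_set s K q \<alpha> n D x = {y. ereal (s (x, y)) \<le> gwcp_qhat s K q \<alpha> n D}"

end

theory Submission
  imports Defs
begin

(*
  Given the group labels of the calibration points, the test point falls in group k with
  probability q_k, independently of the calibration data, and is then exchangeable with the
  n_k calibration points of group k. It is covered iff the calibration scores strictly below
  its own score carry weight less than 1 - alpha, a score of group k weighing q_k / n_k.
  Exchanging the test point with a calibration point of its group moves this weight by at most
  max_k q_k / n_k; averaging over these exchanges and a rank argument show that, given the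
  labels, coverage fails with probability at most alpha + max_k q_k / n_k.

  For the second bound, a Chernoff bound gives n_k >= n p_k / 2 except with probability 1/n
  when p_k >= 8 log n / n. On that event q_k / n_k <= (2 / n) q_k / p_k, and otherwise still
  q_k / n_k <= q_k = p_k (q_k / p_k).
*)

section \<open>Weighted empirical distribution of the scores\<close>

definition mass_below :: "('i \<Rightarrow> real) \<Rightarrow> 'i set \<Rightarrow> ('i \<Rightarrow> real) \<Rightarrow> real \<Rightarrow> real" where
  "mass_below w A sc x = (\<Sum>i\<in>A. if sc i < x then w i else 0)"

lemma mass_below_le_sum:
  assumes "\<forall>i\<in>A. w i \<ge> 0"
  shows "mass_below w A sc x \<le> sum w A"
  unfolding mass_below_def using assms by (intro sum_mono) auto

lemma mass_below_cong:
  assumes "\<forall>i\<in>A. w i = w' i \<and> sc i = sc' i"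
  shows "mass_below w A sc x = mass_below w' A sc' x"
  unfolding mass_below_def using assms by (intro sum.cong) auto

text \<open>Call \<open>mass_below w A sc (sc j)\<close> the rank of \<open>j\<close>. The point of smallest score among those of
  rank at least \<open>t\<close> has only points of rank below \<open>t\<close> strictly below it, and these carry weight
  at least \<open>t\<close>.\<close>
lemma weight_of_low_rank_ge:
  assumes A: "finite A" and w: "\<forall>i\<in>A. w i \<ge> 0" and t: "t \<le> sum w A"
  shows "t \<le> (\<Sum>j\<in>A. if mass_below w A sc (sc j) < t then w j else 0)"
proof -
  define Low where "Low = {j\<in>A. mass_below w A sc (sc j) < t}"
  have rhs: "(\<Sum>j\<in>A. if mass_below w A sc (sc j) < t then w j else 0) = sum w Low"
    unfolding Low_def using A by (rule sum.inter_filter[symmetric])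
  show ?thesis
  proof (cases "Low = A")
    case True
    then show ?thesis using rhs t by simp
  next
    case False
    have fin: "finite (A - Low)" and ne: "A - Low \<noteq> {}" using A False by (auto simp: Low_def)
    define j where "j = arg_min_on sc (A - Low)"
    have j: "j \<in> A - Low" unfolding j_def using fin ne by (rule arg_min_if_finite)
    have j_min: "\<forall>j'\<in>A - Low. sc j \<le> sc j'" unfolding j_def using fin ne by (blast intro: arg_min_least)
    have below_j: "{i\<in>A. sc i < sc j} \<subseteq> Low"
      using j_min by force
    have "t \<le> mass_below w A sc (sc j)" using j by (auto simp: Low_def)
    also have "\<dots> = sum w {i\<in>A. sc i < sc j}"
      unfolding mass_below_def using A by (rule sum.inter_filter[symmetric])
    also have "\<dots> \<le> sum w Low"
      using below_j w A by (intro sum_mono2) (auto simp: Low_def)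
    finally show ?thesis using rhs by simp
  qed
qed

definition group_weight :: "(nat \<Rightarrow> real) \<Rightarrow> nat \<Rightarrow> (nat \<Rightarrow> nat) \<Rightarrow> nat \<Rightarrow> real" where
  "group_weight q n h i = q (h i) / real (grp_count n h (h i))"

definition max_group_weight :: "nat \<Rightarrow> (nat \<Rightarrow> real) \<Rightarrow> nat \<Rightarrow> (nat \<Rightarrow> nat) \<Rightarrow> real" where
  "max_group_weight K q n h =
     Max (insert 0 {q k / real (grp_count n h k) | k. k \<in> {1..K} \<and> grp_count n h k > 0})"

lemma grp_count_cong: "\<forall>i\<in>{1..n}. h i = h' i \<Longrightarrow> grp_count n h k = grp_count n h' k"
  unfolding grp_count_def by (rule arg_cong[where f=card]) auto

lemma grp_count_pos_iff: "grp_count n h k > 0 \<longleftrightarrow> (\<exists>i\<in>{1..n}. h i = k)"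
  by (auto simp: grp_count_def card_gt_0_iff)

lemma real_card_filter: "finite A \<Longrightarrow> real (card {i\<in>A. P i}) = (\<Sum>i\<in>A. if P i then 1 else 0)"
  by (simp add: sum.If_cases Int_def)

lemma group_weight_cong:
  "\<forall>i\<in>{1..n}. h i = h' i \<Longrightarrow> i \<in> {1..n} \<Longrightarrow> group_weight q n h i = group_weight q n h' i"
  unfolding group_weight_def using grp_count_cong[of n h h'] by simp

lemma max_group_weight_cong:
  "\<forall>i\<in>{1..n}. h i = h' i \<Longrightarrow> max_group_weight K q n h = max_group_weight K q n h'"
  unfolding max_group_weight_def using grp_count_cong[of n h h'] by simp

lemma finite_group_weights: "finite {q k / real (grp_count n h k) | k. k \<in> {1..K} \<and> grp_count n h k > 0}"
  by (rule finite_image_set) simp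

lemma max_group_weight_nonneg: "max_group_weight K q n h \<ge> 0"
  unfolding max_group_weight_def using finite_group_weights by (intro Max_ge) auto

lemma group_weight_le_max:
  assumes "i \<in> {1..n}" "h i \<in> {1..K}"
  shows "group_weight q n h i \<le> max_group_weight K q n h"
proof -
  have "grp_count n h (h i) > 0" using assms(1) by (auto simp: grp_count_pos_iff)
  then show ?thesis
    unfolding max_group_weight_def group_weight_def using assms(2) finite_group_weights
    by (intro Max_ge) auto
qed

lemma group_weight_nonneg:
  "\<forall>k\<in>{1..K}. q k \<ge> 0 \<Longrightarrow> h i \<in> {1..K} \<Longrightarrow> group_weight q n h i \<ge> 0"
  by (simp add: group_weight_def)

text \<open>Empty groups contribute nothing: their point mass sits at \<open>\<infinity>\<close>.\<close>
lemma gwcp_mixture_below: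
  assumes h: "\<forall>i\<in>{1..n}. h i \<in> {1..K}"
  shows "gwcp_mixture K q n h sc {y. y < ereal x} = mass_below (group_weight q n h) {1..n} sc x"
proof -
  have "gwcp_mixture K q n h sc {y. y < ereal x}
      = (\<Sum>k\<in>{1..K}. \<Sum>i\<in>{1..n}. if h i = k \<and> sc i < x then q k / real (grp_count n h k) else 0)"
    unfolding gwcp_mixture_def
  proof (rule sum.cong[OF refl])
    fix k
    show "q k * (if 0 < grp_count n h k
          then real (card {i \<in> {1..n}. h i = k \<and> ereal (sc i) \<in> {y. y < ereal x}}) / real (grp_count n h k)
          else if \<infinity> \<in> {y. y < ereal x} then 1 else 0) =
        (\<Sum>i\<in>{1..n}. if h i = k \<and> sc i < x then q k / real (grp_count n h k) else 0)"
    proof (cases "grp_count n h k > 0")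
      case True
      have "real (card {i \<in> {1..n}. h i = k \<and> ereal (sc i) \<in> {y. y < ereal x}})
          = (\<Sum>i\<in>{1..n}. if h i = k \<and> sc i < x then 1 else 0)"
        by (subst real_card_filter) auto
      then show ?thesis
        using True by (simp add: sum_distrib_left sum_divide_distrib) (auto intro: sum.cong)
    next
      case False
      then show ?thesis by (auto simp: grp_count_pos_iff intro!: sum.neutral)
    qed
  qed
  also have "\<dots> = (\<Sum>i\<in>{1..n}. \<Sum>k\<in>{1..K}. if h i = k \<and> sc i < x then q k / real (grp_count n h k) else 0)"
    by (rule sum.swap)
  also have "\<dots> = mass_below (group_weight q n h) {1..n} sc x"
    unfolding mass_below_def group_weight_def using h by (intro sum.cong) auto
  finally show ?thesis .
qed

lemma gwcp_mixture_cong: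
  assumes "\<infinity> \<in> A \<longleftrightarrow> \<infinity> \<in> B" "\<forall>i\<in>{1..n}. ereal (sc i) \<in> A \<longleftrightarrow> ereal (sc i) \<in> B"
  shows "gwcp_mixture K q n h sc A = gwcp_mixture K q n h sc B"
proof -
  have "{i \<in> {1..n}. h i = k \<and> ereal (sc i) \<in> A} = {i \<in> {1..n}. h i = k \<and> ereal (sc i) \<in> B}" for k
    using assms(2) by auto
  then show ?thesis unfolding gwcp_mixture_def by (simp only: assms(1))
qed

lemma gwcp_mixture_mono:
  assumes "A \<subseteq> B" "\<forall>k\<in>{1..K}. q k \<ge> 0"
  shows "gwcp_mixture K q n h sc A \<le> gwcp_mixture K q n h sc B"
  unfolding gwcp_mixture_def
proof (intro sum_mono mult_left_mono)
  fix k assume "k \<in> {1..K}"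
  then show "q k \<ge> 0" using assms(2) by simp
  have "card {i \<in> {1..n}. h i = k \<and> ereal (sc i) \<in> A} \<le> card {i \<in> {1..n}. h i = k \<and> ereal (sc i) \<in> B}"
    by (rule card_mono) (use assms(1) in auto)
  then show "(if 0 < grp_count n h k then real (card {i \<in> {1..n}. h i = k \<and> ereal (sc i) \<in> A}) / real (grp_count n h k)
             else if \<infinity> \<in> A then 1 else 0)
        \<le> (if 0 < grp_count n h k then real (card {i \<in> {1..n}. h i = k \<and> ereal (sc i) \<in> B}) / real (grp_count n h k)
             else if \<infinity> \<in> B then 1 else 0)"
    using assms(1) by (auto intro: divide_right_mono)
qed

lemma gwcp_mixture_less_eq_atMost:
  obtains t where "t \<noteq> -\<infinity>" "t < ereal x"
    "gwcp_mixture K q n h sc {..t} = gwcp_mixture K q n h sc {y. y < ereal x}"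
proof
  define V where "V = {sc i | i. i \<in> {1..n} \<and> sc i < x}"
  have V: "finite V" unfolding V_def by auto
  define t where "t = (if V = {} then ereal (x - 1) else ereal (Max V))"
  show "t \<noteq> -\<infinity>" by (simp add: t_def)
  show tx: "t < ereal x" using V by (auto simp: t_def V_def)
  show "gwcp_mixture K q n h sc {..t} = gwcp_mixture K q n h sc {y. y < ereal x}"
  proof (rule gwcp_mixture_cong)
    show "\<infinity> \<in> {..t} \<longleftrightarrow> \<infinity> \<in> {y. y < ereal x}" by (auto simp: t_def)
    show "\<forall>i\<in>{1..n}. ereal (sc i) \<in> {..t} \<longleftrightarrow> ereal (sc i) \<in> {y. y < ereal x}"
    proof
      fix i assume i: "i \<in> {1..n}"
      show "ereal (sc i) \<in> {..t} \<longleftrightarrow> ereal (sc i) \<in> {y. y < ereal x}"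
      proof (cases "sc i < x")
        case True
        then have "sc i \<in> V" using i by (auto simp: V_def)
        then show ?thesis using True V by (auto simp: t_def)
      next
        case False
        then show ?thesis using tx by (auto dest: le_less_trans)
      qed
    qed
  qed
qed

lemma le_quantile_gwcp_mixture_iff:
  assumes q: "\<forall>k\<in>{1..K}. q k \<ge> 0"
  shows "ereal x \<le> quantile \<tau> (gwcp_mixture K q n h sc) \<longleftrightarrow> gwcp_mixture K q n h sc {y. y < ereal x} < \<tau>"
proof
  assume le: "ereal x \<le> quantile \<tau> (gwcp_mixture K q n h sc)"
  obtain t where t: "t \<noteq> -\<infinity>" "t < ereal x"
    and eq: "gwcp_mixture K q n h sc {..t} = gwcp_mixture K q n h sc {y. y < ereal x}"
    by (rule gwcp_mixture_less_eq_atMost)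
  have "\<not> \<tau> \<le> gwcp_mixture K q n h sc {..t}"
  proof
    assume "\<tau> \<le> gwcp_mixture K q n h sc {..t}"
    then have "quantile \<tau> (gwcp_mixture K q n h sc) \<le> t"
      unfolding quantile_def using t(1) by (intro Inf_lower) simp
    then show False using le t(2) by simp
  qed
  then show "gwcp_mixture K q n h sc {y. y < ereal x} < \<tau>" using eq by simp
next
  assume less: "gwcp_mixture K q n h sc {y. y < ereal x} < \<tau>"
  show "ereal x \<le> quantile \<tau> (gwcp_mixture K q n h sc)"
    unfolding quantile_def
  proof (rule Inf_greatest)
    fix t assume "t \<in> {t. t \<noteq> - \<infinity> \<and> \<tau> \<le> gwcp_mixture K q n h sc {..t}}"
    then have t: "\<tau> \<le> gwcp_mixture K q n h sc {..t}" by simp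
    show "ereal x \<le> t"
    proof (rule ccontr)
      assume "\<not> ereal x \<le> t"
      then have "gwcp_mixture K q n h sc {..t} \<le> gwcp_mixture K q n h sc {y. y < ereal x}"
        using q by (intro gwcp_mixture_mono) auto
      then show False using less t by simp
    qed
  qed
qed

lemma borel_measurable_gwcp_mixture_below:
  assumes h: "\<And>i. i \<in> {1..n} \<Longrightarrow> (\<lambda>\<omega>. h \<omega> i) \<in> measurable M (count_space UNIV)"
    and sc: "\<And>i. i \<in> {1..n} \<Longrightarrow> (\<lambda>\<omega>. sc \<omega> i) \<in> borel_measurable M"
    and x[measurable]: "x \<in> borel_measurable M"
  shows "(\<lambda>\<omega>. gwcp_mixture K q n (h \<omega>) (sc \<omega>) {y. y < ereal (x \<omega>)}) \<in> borel_measurable M"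
proof -
  define N where "N k \<omega> = (\<Sum>i\<in>{1..n}. if h \<omega> i = k then 1 else 0 :: real)" for k \<omega>
  define C where "C k \<omega> = (\<Sum>i\<in>{1..n}. if h \<omega> i = k \<and> sc \<omega> i < x \<omega> then 1 else 0 :: real)" for k \<omega>
  have [measurable]: "N k \<in> borel_measurable M" for k
    unfolding N_def
  proof (rule borel_measurable_sum)
    fix i assume "i \<in> {1..n}"
    note [measurable] = h[OF this]
    show "(\<lambda>\<omega>. if h \<omega> i = k then 1 else 0 :: real) \<in> borel_measurable M" by measurable
  qed
  have [measurable]: "C k \<in> borel_measurable M" for k
    unfolding C_def
  proof (rule borel_measurable_sum)
    fix i assume "i \<in> {1..n}"
    note [measurable] = h[OF this] sc[OF this]
    show "(\<lambda>\<omega>. if h \<omega> i = k \<and> sc \<omega> i < x \<omega> then 1 else 0 :: real) \<in> borel_measurable M"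
      by measurable
  qed
  have "gwcp_mixture K q n (h \<omega>) (sc \<omega>) {y. y < ereal (x \<omega>)}
      = (\<Sum>k\<in>{1..K}. q k * (if 0 < N k \<omega> then C k \<omega> / N k \<omega> else 0))" for \<omega>
  proof -
    have N: "real (grp_count n (h \<omega>) k) = N k \<omega>" for k
      unfolding grp_count_def N_def by (rule real_card_filter) simp
    have C: "real (card {i \<in> {1..n}. h \<omega> i = k \<and> ereal (sc \<omega> i) \<in> {y. y < ereal (x \<omega>)}}) = C k \<omega>" for k
      unfolding C_def by (subst real_card_filter) auto
    have P: "0 < grp_count n (h \<omega>) k \<longleftrightarrow> 0 < N k \<omega>" for k
      unfolding N[symmetric] by simp
    show ?thesis unfolding gwcp_mixture_def P N C by simp
  qed
  then show ?thesis by simp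
qed

section \<open>Group sizes under multinomial sampling\<close>

lemma sum_PiE_prod:
  fixes f :: "'a \<Rightarrow> 'b::comm_semiring_1"
  assumes "finite I" "finite A"
  shows "(\<Sum>h\<in>PiE I (\<lambda>_. A). \<Prod>i\<in>I. f (h i)) = sum f A ^ card I"
proof -
  have "(\<Prod>i\<in>I. sum f A) = (\<Sum>h\<in>PiE I (\<lambda>_. A). \<Prod>i\<in>I. f (h i))"
    using assms by (intro prod_sum_PiE[where f="\<lambda>_. f"]) auto
  then show ?thesis by simp
qed

lemma prod_half_indicator:
  "(\<Prod>i\<in>{1..n}. if h i = k then 1/2 else 1) = (1/2::real) ^ grp_count n h k"
proof -
  have "(\<Prod>i\<in>{1..n}. if h i = k then 1/2 else (1::real)) = (1/2) ^ card ({1..n} \<inter> {i. h i = k})"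
    by (simp add: prod.If_cases)
  also have "{1..n} \<inter> {i. h i = k} = {i\<in>{1..n}. h i = k}" by auto
  finally show ?thesis by (simp add: grp_count_def)
qed

text \<open>Exponential Markov inequality with the test function \<open>2 powr (a - n\<^sub>k)\<close>.\<close>
lemma grp_count_lower_tail_exp:
  fixes p :: "nat \<Rightarrow> real"
  assumes p_nonneg: "\<forall>k\<in>{1..K}. p k \<ge> 0" and p_sum: "(\<Sum>k\<in>{1..K}. p k) = 1" and k: "k \<in> {1..K}"
  shows "(\<Sum>h\<in>PiE {1..n} (\<lambda>_. {1..K}). (\<Prod>i\<in>{1..n}. p (h i)) *
            (if real (grp_count n h k) < a then 1 else 0)) \<le> 2 powr a * (1 - p k / 2) ^ n"
proof -
  define f where "f k' = (if k' = k then 1/2 else (1::real))" for k'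
  have ind: "(if real (grp_count n h k) < a then 1 else 0) \<le> 2 powr a * (\<Prod>i\<in>{1..n}. f (h i))" for h
  proof -
    have "(\<Prod>i\<in>{1..n}. f (h i)) = 2 powr (- real (grp_count n h k))"
      unfolding f_def prod_half_indicator by (simp add: powr_minus powr_realpow power_one_over inverse_eq_divide)
    then have "2 powr a * (\<Prod>i\<in>{1..n}. f (h i)) = 2 powr (a - real (grp_count n h k))"
      by (simp add: powr_diff powr_minus divide_inverse)
    then show ?thesis by (auto intro: ge_one_powr_ge_zero)
  qed
  have "(\<Sum>h\<in>PiE {1..n} (\<lambda>_. {1..K}). (\<Prod>i\<in>{1..n}. p (h i)) * (if real (grp_count n h k) < a then 1 else 0))
      \<le> (\<Sum>h\<in>PiE {1..n} (\<lambda>_. {1..K}). (\<Prod>i\<in>{1..n}. p (h i)) * (2 powr a * (\<Prod>i\<in>{1..n}. f (h i))))"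
    using p_nonneg by (intro sum_mono mult_left_mono[OF ind] prod_nonneg) (auto simp: PiE_iff)
  also have "\<dots> = 2 powr a * (\<Sum>h\<in>PiE {1..n} (\<lambda>_. {1..K}). \<Prod>i\<in>{1..n}. p (h i) * f (h i))"
    by (simp add: sum_distrib_left prod.distrib mult.assoc mult.left_commute)
  also have "\<dots> = 2 powr a * (\<Sum>k'\<in>{1..K}. p k' * f k') ^ n"
    by (subst sum_PiE_prod) auto
  also have "(\<Sum>k'\<in>{1..K}. p k' * f k') = (\<Sum>k'\<in>{1..K}. p k' - (if k' = k then p k / 2 else 0))"
    by (rule sum.cong) (auto simp: f_def)
  also have "\<dots> = 1 - p k / 2"
    using k p_sum by (simp add: sum_subtractf)
  finally show ?thesis .
qed

lemma ln2_le_three_quarters: "ln (2::real) \<le> 3/4"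
proof -
  have "(2::real) \<le> 1 + 3/4 + (3/4)^2/2" by (simp add: power2_eq_square)
  also have "\<dots> \<le> exp (3/4)" by (rule exp_lower_Taylor_quadratic) simp
  finally have "ln 2 \<le> ln (exp (3/4::real))" by (subst ln_le_cancel_iff) auto
  then show ?thesis by simp
qed

lemma chernoff_half_mean_le_inverse:
  fixes x :: real
  assumes n: "n \<ge> 1" and x: "x \<le> 1" "x \<ge> 8 * ln (real n) / real n"
  shows "2 powr (real n * x / 2) * (1 - x / 2) ^ n \<le> 1 / real n"
proof -
  have x0: "x \<ge> 0" using x(2) n by (smt (verit) divide_nonneg_nonneg ln_ge_zero of_nat_0_le_iff of_nat_1 of_nat_mono)
  have "(1 - x / 2) ^ n \<le> exp (- x / 2) ^ n"
    using exp_ge_add_one_self[of "- x / 2"] x by (intro power_mono) auto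
  also have "\<dots> = exp (- real n * x / 2)" by (simp add: exp_of_nat_mult[symmetric])
  moreover have "2 powr (real n * x / 2) = exp (real n * x / 2 * ln 2)"
    by (simp add: powr_def mult.commute)
  ultimately have "2 powr (real n * x / 2) * (1 - x / 2) ^ n \<le> exp (real n * x / 2 * ln 2) * exp (- real n * x / 2)"
    by (metis exp_ge_zero mult_left_mono)
  also have "\<dots> = exp (real n * x / 2 * (ln 2 - 1))"
    by (simp add: exp_add[symmetric] algebra_simps)
  also have "\<dots> \<le> exp (- ln (real n))"
  proof -
    have "ln (real n) \<le> real n * x / 8" using x(2) n by (simp add: field_simps)
    moreover have "real n * x / 2 * (ln 2 - 1) \<le> real n * x / 2 * (-1/4)"
      using ln2_le_three_quarters x0 by (intro mult_left_mono) auto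
    ultimately have "real n * x / 2 * (ln 2 - 1) \<le> - ln (real n)" by linarith
    then show ?thesis by simp
  qed
  also have "\<dots> = 1 / real n" using n by (simp add: exp_minus inverse_eq_divide)
  finally show ?thesis .
qed

lemma grp_count_lower_tail:
  fixes p :: "nat \<Rightarrow> real"
  assumes p_nonneg: "\<forall>k\<in>{1..K}. p k \<ge> 0" and p_sum: "(\<Sum>k\<in>{1..K}. p k) = 1"
    and k: "k \<in> {1..K}" and n: "n \<ge> 1" and pk: "p k \<ge> 8 * ln (real n) / real n"
  shows "(\<Sum>h\<in>PiE {1..n} (\<lambda>_. {1..K}). (\<Prod>i\<in>{1..n}. p (h i)) *
            (if real (grp_count n h k) < real n * p k / 2 then 1 else 0)) \<le> 1 / real n"
proof -
  have "p k \<le> sum p {1..K}" using k p_nonneg by (intro member_le_sum) auto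
  then have "p k \<le> 1" using p_sum by simp
  then show ?thesis
    using grp_count_lower_tail_exp[OF p_nonneg p_sum k] chernoff_half_mean_le_inverse[OF n _ pk]
    by (meson order_trans)
qed

text \<open>A group \<open>k\<close> of size at least \<open>n p\<^sub>k / 2\<close> has weight
  \<open>q\<^sub>k / n\<^sub>k = (q\<^sub>k / p\<^sub>k) (p\<^sub>k / n\<^sub>k) \<le> 2 Mx / n\<close>; a smaller nonempty one has weight at most \<open>Mx p\<^sub>k\<close>.\<close>
lemma max_group_weight_le:
  fixes p q :: "nat \<Rightarrow> real"
  assumes p_nonneg: "\<forall>k\<in>{1..K}. p k \<ge> 0" and n: "n \<ge> 1"
    and h: "\<forall>i\<in>{1..n}. h i \<in> {1..K} \<and> p (h i) > 0"
    and Mx: "\<forall>k\<in>{1..K}. q k / p k \<le> Mx" "Mx \<ge> 0"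
  shows "max_group_weight K q n h
           \<le> Mx * (2 / real n + (\<Sum>k\<in>{1..K}. p k * (if real (grp_count n h k) < real n * p k / 2 then 1 else 0)))"
    (is "_ \<le> Mx * (2 / real n + ?S)")
  unfolding max_group_weight_def
proof (intro Max.boundedI ballI)
  have S: "?S \<ge> 0" using p_nonneg by (intro sum_nonneg) auto
  fix a assume "a \<in> insert 0 {q k / real (grp_count n h k) | k. k \<in> {1..K} \<and> grp_count n h k > 0}"
  then consider "a = 0" | k where "k \<in> {1..K}" "grp_count n h k > 0" "a = q k / real (grp_count n h k)"
    by auto
  then show "a \<le> Mx * (2 / real n + ?S)"
  proof cases
    case 1
    then show ?thesis using Mx(2) S n by simp
  next
    case (2 k)
    define g where "g = real (grp_count n h k)"
    have g: "g \<ge> 1" using 2(2) by (simp add: g_def)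
    have pk: "p k > 0" using 2(2) h by (auto simp: grp_count_pos_iff)
    have "p k / g \<le> 2 / real n + ?S"
    proof (cases "g < real n * p k / 2")
      case True
      then have "p k \<le> ?S"
        using member_le_sum[of k "{1..K}" "\<lambda>k. p k * (if real (grp_count n h k) < real n * p k / 2 then 1 else 0)"]
          2(1) p_nonneg by (simp add: g_def)
      moreover have "p k / g \<le> p k" using g pk by (simp add: divide_le_eq)
      ultimately show ?thesis using n by (smt (verit) divide_nonneg_nonneg of_nat_0_le_iff)
    next
      case False
      then have "p k / g \<le> 2 / real n" using n g by (simp add: field_simps)
      then show ?thesis using S by simp
    qed
    note bound = this
    have "a = (q k / p k) * (p k / g)" using 2(3) pk by (simp add: g_def)
    also have "\<dots> \<le> Mx * (p k / g)" using Mx(1) 2(1) pk g by (intro mult_right_mono) auto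
    also have "\<dots> \<le> Mx * (2 / real n + ?S)" using bound Mx(2) by (rule mult_left_mono)
    finally show ?thesis .
  qed
qed (simp_all add: finite_group_weights)

lemma prod_max_group_weight_le:
  fixes p q :: "nat \<Rightarrow> real"
  assumes h: "h \<in> PiE {1..n} (\<lambda>_. {1..K})" and p_nonneg: "\<forall>k\<in>{1..K}. p k \<ge> 0" and n: "n \<ge> 1"
    and Mx: "\<forall>k\<in>{1..K}. q k / p k \<le> Mx" "Mx \<ge> 0"
  shows "(\<Prod>i\<in>{1..n}. p (h i)) * max_group_weight K q n h
           \<le> (\<Prod>i\<in>{1..n}. p (h i)) *
              (Mx * (2 / real n + (\<Sum>k\<in>{1..K}. p k * (if real (grp_count n h k) < real n * p k / 2 then 1 else 0))))"
proof (cases "(\<Prod>i\<in>{1..n}. p (h i)) = 0")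
  case False
  have "\<forall>i\<in>{1..n}. h i \<in> {1..K} \<and> p (h i) > 0"
    using False h p_nonneg by (auto simp: PiE_iff less_le)
  moreover have "(\<Prod>i\<in>{1..n}. p (h i)) \<ge> 0" using h p_nonneg by (auto simp: PiE_iff intro!: prod_nonneg)
  ultimately show ?thesis by (intro mult_left_mono max_group_weight_le[OF p_nonneg n _ Mx])
next
  case True
  then show ?thesis by (simp only: mult_zero_left order_refl)
qed

lemma expected_max_group_weight_le:
  fixes p q :: "nat \<Rightarrow> real"
  assumes K: "K \<ge> 1" and p_nonneg: "\<forall>k\<in>{1..K}. p k \<ge> 0" and p_sum: "(\<Sum>k\<in>{1..K}. p k) = 1"
    and q_nonneg: "\<forall>k\<in>{1..K}. q k \<ge> 0"
    and p_min: "Min (p ` {1..K}) \<ge> 8 * ln (real n) / real n"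
  shows "(\<Sum>h\<in>PiE {1..n} (\<lambda>_. {1..K}). (\<Prod>i\<in>{1..n}. p (h i)) * max_group_weight K q n h)
           \<le> 4 / real n * Max ((\<lambda>k. q k / p k) ` {1..K})"
proof (cases "n = 0")
  case True
  then show ?thesis by (simp add: max_group_weight_def grp_count_def)
next
  case False
  then have n: "n \<ge> 1" by simp
  define H where "H = PiE {1..n} (\<lambda>_. {1..K})"
  define Mx where "Mx = Max ((\<lambda>k. q k / p k) ` {1..K})"
  define tail where "tail h k = (if real (grp_count n h k) < real n * p k / 2 then 1 else (0::real))" for h k
  define \<pi> where "\<pi> h = (\<Prod>i\<in>{1..n}. p (h i))" for h
  have Mx_ge: "\<forall>k\<in>{1..K}. q k / p k \<le> Mx" unfolding Mx_def by simp
  have Mx0: "Mx \<ge> 0"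
    using Mx_ge K p_nonneg q_nonneg by (meson atLeastAtMost_iff divide_nonneg_nonneg order.trans order_refl)
  have pointwise: "\<pi> h * max_group_weight K q n h \<le> \<pi> h * (Mx * (2 / real n + (\<Sum>k\<in>{1..K}. p k * tail h k)))"
    if "h \<in> H" for h
    unfolding \<pi>_def tail_def using that p_nonneg n Mx_ge Mx0 unfolding H_def by (rule prod_max_group_weight_le)
  have swap: "(\<Sum>k\<in>{1..K}. p k * (\<Sum>h\<in>H. \<pi> h * tail h k)) = (\<Sum>h\<in>H. \<Sum>k\<in>{1..K}. p k * (\<pi> h * tail h k))"
    by (subst sum.swap) (simp add: sum_distrib_left)
  have "(\<Sum>h\<in>H. \<pi> h * max_group_weight K q n h) \<le> (\<Sum>h\<in>H. \<pi> h * (Mx * (2 / real n + (\<Sum>k\<in>{1..K}. p k * tail h k))))"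
    using pointwise by (rule sum_mono)
  also have "\<dots> = Mx * (2 / real n * (\<Sum>h\<in>H. \<pi> h) + (\<Sum>k\<in>{1..K}. p k * (\<Sum>h\<in>H. \<pi> h * tail h k)))"
    unfolding swap by (simp add: sum_distrib_left sum.distrib distrib_left mult.left_commute) (simp add: mult.commute)
  also have "\<dots> \<le> Mx * (2 / real n * 1 + (\<Sum>k\<in>{1..K}. p k * (1 / real n)))"
  proof -
    have "(\<Sum>h\<in>H. \<pi> h) = 1" unfolding H_def \<pi>_def using p_sum by (subst sum_PiE_prod) auto
    moreover have "(\<Sum>h\<in>H. \<pi> h * tail h k) \<le> 1 / real n" if "k \<in> {1..K}" for k
    proof -
      have "p k \<ge> 8 * ln (real n) / real n" using p_min that by (meson Min_le finite_atLeastAtMost finite_imageI image_eqI order_trans)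
      then show ?thesis
        unfolding H_def \<pi>_def tail_def using grp_count_lower_tail[OF p_nonneg p_sum that n] by simp
    qed
    ultimately show ?thesis
      using Mx0 p_nonneg by (intro mult_left_mono add_mono sum_mono) auto
  qed
  also have "\<dots> = Mx * (3 / real n)"
  proof -
    have "(\<Sum>k\<in>{1..K}. p k * (1 / real n)) = 1 / real n"
      using p_sum by (simp add: sum_divide_distrib[symmetric])
    then show ?thesis by (simp add: field_simps)
  qed
  also have "\<dots> \<le> 4 / real n * Mx" using Mx0 n by (simp add: field_simps)
  finally show ?thesis unfolding H_def \<pi>_def Mx_def .
qed

section \<open>Exchanging two coordinates of a product measure\<close>

lemma measurable_PiM_transpose:
  assumes "j \<in> I" "m \<in> I" "\<And>i. i \<in> I \<Longrightarrow> sets (D i) = sets N"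
  shows "(\<lambda>z. \<lambda>i\<in>I. z (Transposition.transpose j m i)) \<in> measurable (PiM I D) (PiM I D)"
proof (rule measurable_restrict)
  fix i assume "i \<in> I"
  then have "Transposition.transpose j m i \<in> I" using assms(1,2) by (auto simp: Transposition.transpose_def)
  then have "(\<lambda>z. z (Transposition.transpose j m i)) \<in> measurable (PiM I D) (D (Transposition.transpose j m i))"
    by (rule measurable_component_singleton)
  then show "(\<lambda>z. z (Transposition.transpose j m i)) \<in> measurable (PiM I D) (D i)"
    using assms(3) \<open>i \<in> I\<close> \<open>Transposition.transpose j m i \<in> I\<close> by (metis measurable_cong_sets)
qed

lemma transpose_preimage_PiE:
  assumes "j \<in> I" "m \<in> I"
  shows "(\<lambda>z. \<lambda>i\<in>I. z (Transposition.transpose j m i)) -` PiE I A \<inter> PiE I (\<lambda>_. S)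
           = PiE I (\<lambda>i. A (Transposition.transpose j m i) \<inter> S)"
proof -
  have tI: "Transposition.transpose j m i \<in> I" if "i \<in> I" for i using assms that by (auto simp: Transposition.transpose_def)
  show ?thesis
  proof (intro equalityI subsetI)
    fix z assume "z \<in> (\<lambda>z. \<lambda>i\<in>I. z (Transposition.transpose j m i)) -` PiE I A \<inter> PiE I (\<lambda>_. S)"
    then show "z \<in> PiE I (\<lambda>i. A (Transposition.transpose j m i) \<inter> S)"
      using tI by (auto simp: PiE_iff) (metis transpose_involutory)
  next
    fix z assume z: "z \<in> PiE I (\<lambda>i. A (Transposition.transpose j m i) \<inter> S)"
    have "z (Transposition.transpose j m i) \<in> A i" if "i \<in> I" for i
      using z tI[OF that] unfolding PiE_iff by (metis IntD1 transpose_involutory)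
    then show "z \<in> (\<lambda>z. \<lambda>i\<in>I. z (Transposition.transpose j m i)) -` PiE I A \<inter> PiE I (\<lambda>_. S)"
      using z by (auto simp: PiE_iff)
  qed
qed

lemma prod_transpose_eq:
  fixes f :: "'i \<Rightarrow> 'i \<Rightarrow> 'a::comm_monoid_mult"
  assumes "finite I" "j \<in> I" "m \<in> I" "j \<noteq> m" "f j m * f m j = f j j * f m m"
  shows "(\<Prod>i\<in>I. f i (Transposition.transpose j m i)) = (\<Prod>i\<in>I. f i i)"
proof -
  define I' where "I' = I - {j, m}"
  have I: "I = insert j (insert m I')" "j \<notin> insert m I'" "m \<notin> I'" "finite I'"
    using assms by (auto simp: I'_def)
  have "(\<Prod>i\<in>I'. f i (Transposition.transpose j m i)) = (\<Prod>i\<in>I'. f i i)"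
    by (rule prod.cong) (auto simp: I'_def)
  then show ?thesis unfolding I(1) using I(2-4) assms(4,5) by (simp flip: mult.assoc)
qed

lemma distr_restricted_PiM_transpose:
  fixes D :: "'i \<Rightarrow> 'a measure"
  assumes I: "finite I" and D: "\<And>i. prob_space (D i)" and DN: "\<And>i. sets (D i) = sets N"
    and jm: "j \<in> I" "m \<in> I" "j \<noteq> m"
    and B: "\<And>i. i \<in> I \<Longrightarrow> B i \<in> sets N" "B j = B m"
    and proportional: "\<And>A A'. A \<in> sets N \<Longrightarrow> A' \<in> sets N \<Longrightarrow>
       emeasure (D j) (A \<inter> B j) * emeasure (D m) (A' \<inter> B j) = emeasure (D j) (A' \<inter> B j) * emeasure (D m) (A \<inter> B j)"
  defines "\<nu> \<equiv> density (PiM I D) (indicator (PiE I B))"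
  shows "distr \<nu> (PiM I D) (\<lambda>z. \<lambda>i\<in>I. z (Transposition.transpose j m i)) = \<nu>"
proof (rule measure_eqI_PiM_finite[OF I, where M=D])
  interpret product_prob_space D
    using D by (simp add: product_prob_space_def product_prob_space_axioms_def product_sigma_finite_def prob_space_imp_sigma_finite)
  let ?\<mu> = "PiM I D"
  let ?f = "\<lambda>z. \<lambda>i\<in>I. z (Transposition.transpose j m i)"
  have box: "PiE I B \<in> sets ?\<mu>" using B DN by (auto intro!: sets_PiM_I_finite I)
  have \<nu>: "emeasure \<nu> X = emeasure ?\<mu> (X \<inter> PiE I B)" if "X \<in> sets ?\<mu>" for X
    unfolding \<nu>_def using that box by (simp add: emeasure_restricted Int_commute)
  fix A assume A: "\<And>i. i \<in> I \<Longrightarrow> A i \<in> sets (D i)"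
  have AN: "A i \<in> sets N" if "i \<in> I" for i using A[OF that] DN by simp
  have tI: "Transposition.transpose j m i \<in> I" if "i \<in> I" for i using jm that by (auto simp: Transposition.transpose_def)
  have box_measure: "emeasure ?\<mu> (PiE I A' \<inter> PiE I B) = (\<Prod>i\<in>I. emeasure (D i) (A' i \<inter> B i))"
    if "\<And>i. i \<in> I \<Longrightarrow> A' i \<in> sets N" for A'
    unfolding PiE_Int using that B DN by (subst emeasure_PiM) (auto simp: I)
  have "?f -` PiE I A \<inter> space ?\<mu> = PiE I (\<lambda>i. A (Transposition.transpose j m i) \<inter> space N)"
    using DN jm(1,2) by (simp add: space_PiM sets_eq_imp_space_eq[OF DN] transpose_preimage_PiE)
  also have "\<dots> = PiE I (\<lambda>i. A (Transposition.transpose j m i))"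
    using AN tI sets.sets_into_space by (intro PiE_cong) blast
  finally have "emeasure (distr \<nu> ?\<mu> ?f) (PiE I A) = emeasure \<nu> (PiE I (\<lambda>i. A (Transposition.transpose j m i)))"
    using A measurable_PiM_transpose[OF jm(1,2) DN]
    by (simp add: emeasure_distr \<nu>_def sets_PiM_I_finite I)
  also have "\<dots> = (\<Prod>i\<in>I. emeasure (D i) (A (Transposition.transpose j m i) \<inter> B i))"
    using tI AN DN by (subst \<nu>) (auto intro!: sets_PiM_I_finite I box_measure)
  also have "\<dots> = (\<Prod>i\<in>I. emeasure (D i) (A i \<inter> B i))"
    using I jm proportional[OF AN[OF jm(2)] AN[OF jm(1)]] B(2)
    by (intro prod_transpose_eq[where f="\<lambda>i i'. emeasure (D i) (A i' \<inter> B i)"]) (simp_all add: mult.commute)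
  also have "\<dots> = emeasure \<nu> (PiE I A)"
    using AN A by (simp add: \<nu> box_measure sets_PiM_I_finite I)
  finally show "emeasure (distr \<nu> ?\<mu> ?f) (PiE I A) = emeasure \<nu> (PiE I A)" .
next
  show "range (\<lambda>_. space (PiM I D)) \<subseteq> prod_algebra I D" "(\<Union>i::nat. space (PiM I D)) = space (PiM I D)"
    by (auto simp: space_PiM intro: space_in_prod_algebra)
  have "PiE I B \<in> sets (PiM I D)" using B DN by (auto intro!: sets_PiM_I_finite I)
  moreover have "prob_space (PiM I D)" using D by (rule prob_space_PiM)
  then have "finite_measure (PiM I D)" by (simp add: prob_space_def)
  ultimately show "emeasure (distr \<nu> (PiM I D) (\<lambda>z. \<lambda>i\<in>I. z (Transposition.transpose j m i))) (space (PiM I D)) \<noteq> \<infinity>"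
    using measurable_PiM_transpose[OF jm(1,2) DN]
    by (simp add: emeasure_distr \<nu>_def emeasure_restricted finite_measure.emeasure_finite)
qed (simp_all add: \<nu>_def)

text \<open>The hypothesis \<open>proportional\<close> says that \<open>D j\<close> and \<open>D m\<close> agree on \<open>B j\<close> up to a constant factor.\<close>
lemma emeasure_PiM_transpose_on_box:
  fixes D :: "'i \<Rightarrow> 'a measure"
  assumes I: "finite I" and D: "\<And>i. i \<in> I \<Longrightarrow> prob_space (D i)" and DN: "\<And>i. i \<in> I \<Longrightarrow> sets (D i) = sets N"
    and jm: "j \<in> I" "m \<in> I" "j \<noteq> m"
    and B: "\<And>i. i \<in> I \<Longrightarrow> B i \<in> sets N" "B j = B m"
    and proportional: "\<And>A A'. A \<in> sets N \<Longrightarrow> A' \<in> sets N \<Longrightarrow>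
       emeasure (D j) (A \<inter> B j) * emeasure (D m) (A' \<inter> B j) = emeasure (D j) (A' \<inter> B j) * emeasure (D m) (A \<inter> B j)"
    and E: "E \<in> sets (PiM I D)"
  shows "emeasure (PiM I D) ((\<lambda>z. \<lambda>i\<in>I. z (Transposition.transpose j m i)) -` E \<inter> space (PiM I D) \<inter> PiE I B)
       = emeasure (PiM I D) (E \<inter> PiE I B)"
proof -
  define D' where "D' i = (if i \<in> I then D i else D j)" for i
  let ?\<mu> = "PiM I D'"
  let ?f = "\<lambda>z. \<lambda>i\<in>I. z (Transposition.transpose j m i)"
  define \<nu> where "\<nu> = density ?\<mu> (indicator (PiE I B))"
  have PiM_D': "PiM I D = ?\<mu>" by (rule PiM_cong) (simp_all add: D'_def)
  have D'N: "sets (D' i) = sets N" for i using DN jm by (simp add: D'_def)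
  have E': "E \<in> sets ?\<mu>" using E by (simp add: PiM_D')
  have box: "PiE I B \<in> sets ?\<mu>" using B D'N by (auto intro!: sets_PiM_I_finite I)
  have \<nu>: "emeasure \<nu> X = emeasure ?\<mu> (X \<inter> PiE I B)" if "X \<in> sets ?\<mu>" for X
    unfolding \<nu>_def using that box by (simp add: emeasure_restricted Int_commute)
  have f: "?f \<in> measurable ?\<mu> ?\<mu>" using jm(1,2) D'N by (rule measurable_PiM_transpose)
  have invariant: "distr \<nu> ?\<mu> ?f = \<nu>"
    unfolding \<nu>_def using I D jm D'N B proportional
    by (intro distr_restricted_PiM_transpose) (auto simp: D'_def)
  have "emeasure ?\<mu> (?f -` E \<inter> space ?\<mu> \<inter> PiE I B) = emeasure \<nu> (?f -` E \<inter> space ?\<mu>)"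
    using f E' by (simp add: \<nu> measurable_sets)
  also have "\<dots> = emeasure (distr \<nu> ?\<mu> ?f) E" using f E' by (simp add: emeasure_distr \<nu>_def)
  also have "\<dots> = emeasure ?\<mu> (E \<inter> PiE I B)" using E' by (simp add: invariant \<nu>)
  finally show ?thesis unfolding PiM_D' .
qed

lemma mass_below_transpose_le:
  assumes A: "finite A" "j \<in> A" "m \<notin> A" and w: "w j \<ge> 0"
  shows "mass_below w A (\<lambda>i. sc (Transposition.transpose j m i)) x \<le> mass_below w A sc x + w j"
proof -
  have split: "mass_below w A sc' x = (if sc' j < x then w j else 0) + (\<Sum>i\<in>A - {j}. if sc' i < x then w i else 0)"
    for sc' unfolding mass_below_def using A by (subst sum.remove[of _ j]) auto
  have "(\<Sum>i\<in>A - {j}. if sc (Transposition.transpose j m i) < x then w i else 0)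
      = (\<Sum>i\<in>A - {j}. if sc i < x then w i else 0)"
    using A by (intro sum.cong) (auto simp: Transposition.transpose_def)
  then show ?thesis unfolding split[of sc] split[of "\<lambda>i. sc (Transposition.transpose j m i)"] using w by simp
qed

section \<open>Coverage of the group-weighted conformal prediction set\<close>

text \<open>Points \<open>1..n\<close> are the calibration data and point \<open>n + 1\<close> is the test point.\<close>
locale gwcp_model = prob_space M
  for M :: "'o measure" +
  fixes K n :: nat and p q :: "nat \<Rightarrow> real"
    and MX :: "'x measure" and MY :: "'y measure"
    and Pk :: "nat \<Rightarrow> ('x \<times> 'y) measure"
    and Z :: "nat \<Rightarrow> 'o \<Rightarrow> (nat \<times> 'x) \<times> 'y"
    and s :: "(nat \<times> 'x) \<times> 'y \<Rightarrow> real"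
  assumes p_sum: "(\<Sum>k\<in>{1..K}. p k) = 1"
    and q_sum: "(\<Sum>k\<in>{1..K}. q k) = 1"
    and Pi_prob: "\<forall>k\<in>{1..K}. prob_space (Pk k)"
    and Pi_sets: "\<forall>k\<in>{1..K}. sets (Pk k) = sets (MX \<Otimes>\<^sub>M MY)"
    and Z_meas: "\<forall>i\<in>{1..n+1}. Z i \<in> measurable M ((count_space UNIV \<Otimes>\<^sub>M MX) \<Otimes>\<^sub>M MY)"
    and Z_indep: "indep_vars (\<lambda>i. (count_space UNIV \<Otimes>\<^sub>M MX) \<Otimes>\<^sub>M MY) Z {1..n+1}"
    and Z_P: "\<forall>i\<in>{1..n}. \<forall>k\<in>{1..K}. \<forall>A\<in>sets (MX \<Otimes>\<^sub>M MY).
                measure M {\<omega>\<in>space M. fst (fst (Z i \<omega>)) = k \<and> (snd (fst (Z i \<omega>)), snd (Z i \<omega>)) \<in> A}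
                = p k * measure (Pk k) A"
    and Z_Q: "\<forall>k\<in>{1..K}. \<forall>A\<in>sets (MX \<Otimes>\<^sub>M MY).
                measure M {\<omega>\<in>space M. fst (fst (Z (n+1) \<omega>)) = k \<and> (snd (fst (Z (n+1) \<omega>)), snd (Z (n+1) \<omega>)) \<in> A}
                = q k * measure (Pk k) A"
    and s_meas: "s \<in> borel_measurable ((count_space UNIV \<Otimes>\<^sub>M MX) \<Otimes>\<^sub>M MY)"
begin

abbreviation data :: "((nat \<times> 'x) \<times> 'y) measure" where
  "data \<equiv> (count_space UNIV \<Otimes>\<^sub>M MX) \<Otimes>\<^sub>M MY"

abbreviation "label i \<omega> \<equiv> fst (fst (Z i \<omega>))"

abbreviation "score i \<omega> \<equiv> s (Z i \<omega>)"

abbreviation "label_configs \<equiv> PiE {1..n} (\<lambda>_. {1..K})"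

definition label_law :: "nat \<Rightarrow> nat \<Rightarrow> real" where
  "label_law i k = (if i = n + 1 then q k else p k)"

definition calib_labels_event :: "(nat \<Rightarrow> nat) \<Rightarrow> 'o set" where
  "calib_labels_event h = {\<omega>\<in>space M. \<forall>i\<in>{1..n}. label i \<omega> = h i}"

definition test_label_event :: "nat \<Rightarrow> 'o set" where
  "test_label_event k = {\<omega>\<in>space M. label (n + 1) \<omega> = k}"

definition below_event :: "(nat \<Rightarrow> nat) \<Rightarrow> nat \<Rightarrow> real \<Rightarrow> 'o set" where
  "below_event h j t = {\<omega>\<in>space M. mass_below (group_weight q n h) {1..n} (\<lambda>i. score i \<omega>) (score j \<omega>) < t
                          \<and> (\<forall>i\<in>{1..n}. label i \<omega> = h i)}"

lemma measurable_Z: "i \<in> {1..n+1} \<Longrightarrow> Z i \<in> measurable M data"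
  using Z_meas by blast

lemma measurable_label: "i \<in> {1..n+1} \<Longrightarrow> label i \<in> measurable M (count_space UNIV)"
  by (rule measurable_compose[OF measurable_Z]) measurable

lemma measurable_score: "i \<in> {1..n+1} \<Longrightarrow> score i \<in> borel_measurable M"
  by (rule measurable_compose[OF measurable_Z s_meas])

lemma calib_labels_event_sets: "calib_labels_event h \<in> events"
proof -
  have "Measurable.pred M (\<lambda>\<omega>. \<forall>i\<in>{1..n}. label i \<omega> = h i)"
  proof (rule pred_intros_finite)
    fix i assume "i \<in> {1..n}"
    then have [measurable]: "label i \<in> measurable M (count_space UNIV)" by (intro measurable_label) auto
    show "Measurable.pred M (\<lambda>\<omega>. label i \<omega> = h i)" by measurable
  qed simp
  then show ?thesis unfolding calib_labels_event_def by measurable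
qed

lemma test_label_event_sets: "test_label_event k \<in> events"
proof -
  have [measurable]: "label (n+1) \<in> measurable M (count_space UNIV)" by (intro measurable_label) auto
  show ?thesis unfolding test_label_event_def by measurable
qed

lemma below_event_sets:
  assumes "j \<in> {1..n+1}"
  shows "below_event h j t \<in> events"
proof -
  have [measurable]: "(\<lambda>\<omega>. mass_below (group_weight q n h) {1..n} (\<lambda>i. score i \<omega>) (score j \<omega>)) \<in> borel_measurable M"
    unfolding mass_below_def
  proof (rule borel_measurable_sum)
    fix i assume "i \<in> {1..n}"
    then have "i \<in> {1..n+1}" by simp
    note [measurable] = measurable_score[OF this] measurable_score[OF assms]
    show "(\<lambda>\<omega>. if score i \<omega> < score j \<omega> then group_weight q n h i else 0) \<in> borel_measurable M"
      by measurable
  qed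
  have below: "{\<omega>\<in>space M. mass_below (group_weight q n h) {1..n} (\<lambda>i. score i \<omega>) (score j \<omega>) < t} \<in> events"
    by measurable
  have "below_event h j t = {\<omega>\<in>space M. mass_below (group_weight q n h) {1..n} (\<lambda>i. score i \<omega>) (score j \<omega>) < t}
      \<inter> calib_labels_event h"
    by (auto simp: below_event_def calib_labels_event_def)
  then show ?thesis using below calib_labels_event_sets by (simp only: sets.Int)
qed

lemma prob_Z_in_group:
  assumes i: "i \<in> {1..n+1}" and k: "k \<in> {1..K}" and A: "A \<in> sets data"
  shows "prob {\<omega>\<in>space M. Z i \<omega> \<in> A \<and> label i \<omega> = k}
           = label_law i k * measure (Pk k) ((\<lambda>(x, y). ((k, x), y)) -` A \<inter> space (MX \<Otimes>\<^sub>M MY))"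
proof -
  define B where "B = (\<lambda>(x, y). ((k, x), y)) -` A \<inter> space (MX \<Otimes>\<^sub>M MY)"
  have "(\<lambda>(x, y). ((k, x), y)) \<in> measurable (MX \<Otimes>\<^sub>M MY) data" by measurable
  then have B: "B \<in> sets (MX \<Otimes>\<^sub>M MY)" unfolding B_def using A by (rule measurable_sets)
  have "{\<omega>\<in>space M. Z i \<omega> \<in> A \<and> label i \<omega> = k}
      = {\<omega>\<in>space M. label i \<omega> = k \<and> (snd (fst (Z i \<omega>)), snd (Z i \<omega>)) \<in> B}"
  proof (rule Collect_cong, rule conj_cong[OF refl])
    fix \<omega> assume "\<omega> \<in> space M"
    then have "Z i \<omega> \<in> space data" using measurable_Z[OF i] by (rule measurable_space[rotated])
    then show "(Z i \<omega> \<in> A \<and> label i \<omega> = k) = (label i \<omega> = k \<and> (snd (fst (Z i \<omega>)), snd (Z i \<omega>)) \<in> B)"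
      by (cases "Z i \<omega>") (auto simp: B_def space_pair_measure)
  qed
  also have "prob \<dots> = label_law i k * measure (Pk k) B"
    using Z_P Z_Q i k B by (cases "i = n + 1") (auto simp: label_law_def)
  finally show ?thesis by (simp add: B_def)
qed

lemma prob_label:
  assumes i: "i \<in> {1..n+1}" and k: "k \<in> {1..K}"
  shows "prob {\<omega>\<in>space M. label i \<omega> = k} = label_law i k"
proof -
  have "space (Pk k) = space (MX \<Otimes>\<^sub>M MY)" using Pi_sets k by (metis sets_eq_imp_space_eq)
  then have "(\<lambda>(x, y). ((k, x), y)) -` space data \<inter> space (MX \<Otimes>\<^sub>M MY) = space (Pk k)"
    by (auto simp: space_pair_measure)
  then have "measure (Pk k) ((\<lambda>(x, y). ((k, x), y)) -` space data \<inter> space (MX \<Otimes>\<^sub>M MY)) = 1"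
    using Pi_prob k by (simp add: prob_space.prob_space)
  moreover have "{\<omega>\<in>space M. Z i \<omega> \<in> space data \<and> label i \<omega> = k} = {\<omega>\<in>space M. label i \<omega> = k}"
    using measurable_space[OF measurable_Z[OF i]] by auto
  ultimately show ?thesis using prob_Z_in_group[OF i k sets.top] by simp
qed

lemma AE_label_in_range: "AE \<omega> in M. \<forall>i\<in>{1..n+1}. label i \<omega> \<in> {1..K}"
proof (rule AE_finite_allI)
  fix i assume i: "i \<in> {1..n+1}"
  have [measurable]: "label i \<in> measurable M (count_space UNIV)" using i by (rule measurable_label)
  have "{\<omega>\<in>space M. label i \<omega> \<in> {1..K}} = (\<Union>k\<in>{1..K}. {\<omega>\<in>space M. label i \<omega> = k})" by auto
  then have "prob {\<omega>\<in>space M. label i \<omega> \<in> {1..K}} = (\<Sum>k\<in>{1..K}. prob {\<omega>\<in>space M. label i \<omega> = k})"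
    by (simp only:) (intro finite_measure_finite_Union, auto simp: disjoint_family_on_def)
  also have "\<dots> = 1" using i p_sum q_sum by (cases "i = n + 1") (simp_all add: prob_label label_law_def)
  finally have "AE \<omega> in M. \<omega> \<in> {\<omega>\<in>space M. label i \<omega> \<in> {1..K}}" by (rule AE_prob_1)
  then show "AE \<omega> in M. label i \<omega> \<in> {1..K}" by eventually_elim auto
qed simp

lemma prob_calib_labels_event:
  assumes h: "h \<in> label_configs"
  shows "prob (calib_labels_event h) = (\<Prod>i\<in>{1..n}. p (h i))"
proof (cases "n = 0")
  case True
  then show ?thesis unfolding calib_labels_event_def by (simp add: prob_space)
next
  case False
  have "indep_vars (\<lambda>_. data) Z {1..n}"
    using Z_indep by (rule indep_vars_subset) auto
  then have "indep_vars (\<lambda>_. count_space UNIV) label {1..n}"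
    by (rule indep_vars_compose2[where X=Z]) measurable
  then have "prob (\<Inter>i\<in>{1..n}. label i -` {h i} \<inter> space M) = (\<Prod>i\<in>{1..n}. prob (label i -` {h i} \<inter> space M))"
    using False by (intro indep_varsD_finite) auto
  moreover have "(\<Inter>i\<in>{1..n}. label i -` {h i} \<inter> space M) = calib_labels_event h"
    using False by (auto simp: calib_labels_event_def)
  moreover have "prob (label i -` {h i} \<inter> space M) = p (h i)" if "i \<in> {1..n}" for i
  proof -
    have "label i -` {h i} \<inter> space M = {\<omega>\<in>space M. label i \<omega> = h i}" by auto
    then show ?thesis using that h prob_label[of i "h i"] by (auto simp: label_law_def PiE_iff)
  qed
  ultimately show ?thesis by simp
qed

lemma prob_calib_and_test_label:
  assumes X: "X \<in> sets (PiM {1..n} (\<lambda>_. data))" and k: "k \<in> {1..K}"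
  shows "prob ({\<omega>\<in>space M. (\<lambda>i\<in>{1..n}. Z i \<omega>) \<in> X} \<inter> test_label_event k)
           = prob {\<omega>\<in>space M. (\<lambda>i\<in>{1..n}. Z i \<omega>) \<in> X} * q k"
proof -
  have "indep_var (PiM {1..n} (\<lambda>_. data)) (\<lambda>\<omega>. \<lambda>i\<in>{1..n}. Z i \<omega>) (PiM {n+1} (\<lambda>_. data)) (\<lambda>\<omega>. \<lambda>i\<in>{n+1}. Z i \<omega>)"
    using Z_indep by (rule indep_var_restrict) auto
  moreover define Y where "Y = {z \<in> space (PiM {n+1} (\<lambda>_. data)). fst (fst (z (n+1))) = k}"
  moreover have "Y \<in> sets (PiM {n+1} (\<lambda>_. data))"
  proof -
    have [measurable]: "(\<lambda>z. z (n+1)) \<in> measurable (PiM {n+1} (\<lambda>_. data)) data"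
      by (rule measurable_component_singleton) simp
    show ?thesis unfolding Y_def by measurable
  qed
  ultimately have "prob ((\<lambda>\<omega>. ((\<lambda>i\<in>{1..n}. Z i \<omega>), (\<lambda>i\<in>{n+1}. Z i \<omega>))) -` (X \<times> Y) \<inter> space M)
      = prob ((\<lambda>\<omega>. \<lambda>i\<in>{1..n}. Z i \<omega>) -` X \<inter> space M) * prob ((\<lambda>\<omega>. \<lambda>i\<in>{n+1}. Z i \<omega>) -` Y \<inter> space M)"
    using X by (intro indep_varD) auto
  moreover have "Z (n+1) \<omega> \<in> space data" if "\<omega> \<in> space M" for \<omega>
    using measurable_space[OF measurable_Z that] by simp
  ultimately show ?thesis
    using prob_label[of "n+1" k] k
    by (simp add: Y_def test_label_event_def space_PiM PiE_iff label_law_def vimage_def Int_def conj_ac cong: conj_cong)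
qed

lemma label_law_nonneg:
  assumes "i \<in> {1..n+1}" "k \<in> {1..K}"
  shows "label_law i k \<ge> 0"
proof -
  have "0 \<le> prob {\<omega>\<in>space M. label i \<omega> = k}" by (rule measure_nonneg)
  then show ?thesis using prob_label[OF assms] by simp
qed

text \<open>Nonnegativity of \<open>q\<close> need not be assumed: \<open>q k\<close> is the probability that the test label is \<open>k\<close>.\<close>
lemma q_nonneg: "\<forall>k\<in>{1..K}. q k \<ge> 0"
proof
  fix k assume "k \<in> {1..K}"
  then show "q k \<ge> 0" using label_law_nonneg[of "n+1" k] by (simp add: label_law_def)
qed

lemma sets_PiM_mass_below:
  assumes "{1..n} \<subseteq> J" "j \<in> J"
  shows "{z\<in>space (PiM J (\<lambda>_. data)). mass_below (group_weight q n h) {1..n} (\<lambda>i. s (z i)) (s (z j)) < t}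
           \<in> sets (PiM J (\<lambda>_. data))"
proof -
  have [measurable]: "(\<lambda>z. z j) \<in> measurable (PiM J (\<lambda>_. data)) data"
    using assms(2) by (rule measurable_component_singleton)
  have [measurable]: "(\<lambda>z. mass_below (group_weight q n h) {1..n} (\<lambda>i. s (z i)) (s (z j)))
      \<in> borel_measurable (PiM J (\<lambda>_. data))"
    unfolding mass_below_def
  proof (rule borel_measurable_sum)
    fix i assume "i \<in> {1..n}"
    then have [measurable]: "(\<lambda>z. z i) \<in> measurable (PiM J (\<lambda>_. data)) data"
      using assms(1) by (intro measurable_component_singleton) auto
    show "(\<lambda>z. if s (z i) < s (z j) then group_weight q n h i else 0) \<in> borel_measurable (PiM J (\<lambda>_. data))"
      using s_meas by measurable
  qed
  show ?thesis by measurable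
qed

lemma sets_PiM_labels:
  assumes "{1..n} \<subseteq> J"
  shows "{z\<in>space (PiM J (\<lambda>_. data)). \<forall>i\<in>{1..n}. fst (fst (z i)) = h i} \<in> sets (PiM J (\<lambda>_. data))"
proof -
  have "Measurable.pred (PiM J (\<lambda>_. data)) (\<lambda>z. \<forall>i\<in>{1..n}. fst (fst (z i)) = h i)"
  proof (rule pred_intros_finite)
    fix i assume "i \<in> {1..n}"
    then have [measurable]: "(\<lambda>z. z i) \<in> measurable (PiM J (\<lambda>_. data)) data"
      using assms by (intro measurable_component_singleton) auto
    show "Measurable.pred (PiM J (\<lambda>_. data)) (\<lambda>z. fst (fst (z i)) = h i)" by measurable
  qed simp
  then show ?thesis by measurable
qed

lemma prob_below_and_test_label:
  assumes j: "j \<in> {1..n}" and k: "k \<in> {1..K}"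
  shows "prob (below_event h j t \<inter> test_label_event k) = prob (below_event h j t) * q k"
proof -
  let ?P = "PiM {1..n} (\<lambda>_. data)"
  define X where "X = {z\<in>space ?P. mass_below (group_weight q n h) {1..n} (\<lambda>i. s (z i)) (s (z j)) < t}
                     \<inter> {z\<in>space ?P. \<forall>i\<in>{1..n}. fst (fst (z i)) = h i}"
  have X: "X \<in> sets ?P" unfolding X_def using j by (intro sets.Int sets_PiM_mass_below sets_PiM_labels) auto
  have "(\<lambda>i\<in>{1..n}. Z i \<omega>) \<in> space ?P" if "\<omega> \<in> space M" for \<omega>
    using measurable_space[OF measurable_Z that] by (auto simp: space_PiM)
  moreover have "mass_below (group_weight q n h) {1..n} (\<lambda>i. s ((\<lambda>i\<in>{1..n}. Z i \<omega>) i)) (s ((\<lambda>i\<in>{1..n}. Z i \<omega>) j))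
      = mass_below (group_weight q n h) {1..n} (\<lambda>i. score i \<omega>) (score j \<omega>)" for \<omega>
    using j unfolding mass_below_def by (intro sum.cong) auto
  ultimately have "below_event h j t = {\<omega>\<in>space M. (\<lambda>i\<in>{1..n}. Z i \<omega>) \<in> X}"
    by (auto simp: below_event_def X_def)
  then show ?thesis using prob_calib_and_test_label[OF X k] by simp
qed

abbreviation Z_law :: "(nat \<Rightarrow> (nat \<times> 'x) \<times> 'y) measure" where
  "Z_law \<equiv> PiM {1..n+1} (\<lambda>i. distr M data (Z i))"

definition label_box :: "(nat \<Rightarrow> nat) \<Rightarrow> (nat \<Rightarrow> (nat \<times> 'x) \<times> 'y) set" where
  "label_box g = PiE {1..n+1} (\<lambda>i. {z\<in>space data. fst (fst z) = g i})"

lemma sets_Z_law: "sets Z_law = sets (PiM {1..n+1} (\<lambda>_. data))"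
  by (rule sets_PiM_cong) simp_all

lemma space_Z_law: "space Z_law = space (PiM {1..n+1} (\<lambda>_. data))"
  using sets_Z_law by (rule sets_eq_imp_space_eq)

lemma finite_measure_Z_law: "finite_measure Z_law"
proof -
  have "prob_space Z_law" using measurable_Z by (intro prob_space_PiM prob_space_distr) auto
  then show ?thesis by (simp add: prob_space_def)
qed

lemma prob_Z_vimage:
  assumes "E \<in> sets (PiM {1..n+1} (\<lambda>_. data))"
  shows "prob ((\<lambda>\<omega>. \<lambda>i\<in>{1..n+1}. Z i \<omega>) -` E \<inter> space M) = measure Z_law E"
proof -
  have Z: "random_variable data (Z i)" if "i \<in> {1..n+1}" for i using that by (rule measurable_Z)
  then have "distr M (PiM {1..n+1} (\<lambda>_. data)) (\<lambda>\<omega>. \<lambda>i\<in>{1..n+1}. Z i \<omega>) = Z_law"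
    using Z_indep indep_vars_iff_distr_eq_PiM'[where I="{1..n+1}" and M'="\<lambda>_. data" and X=Z] by simp
  moreover have "(\<lambda>\<omega>. \<lambda>i\<in>{1..n+1}. Z i \<omega>) \<in> measurable M (PiM {1..n+1} (\<lambda>_. data))"
    using Z by (rule measurable_restrict)
  ultimately show ?thesis using measure_distr assms by metis
qed

lemma emeasure_distr_Z_group:
  assumes i: "i \<in> {1..n+1}" and k: "k \<in> {1..K}" and A: "A \<in> sets data"
  shows "emeasure (distr M data (Z i)) (A \<inter> {z\<in>space data. fst (fst z) = k})
           = ennreal (label_law i k * measure (Pk k) ((\<lambda>(x, y). ((k, x), y)) -` A \<inter> space (MX \<Otimes>\<^sub>M MY)))"
proof -
  have "A \<inter> {z\<in>space data. fst (fst z) = k} \<in> sets data" using A by measurable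
  then have "emeasure (distr M data (Z i)) (A \<inter> {z\<in>space data. fst (fst z) = k})
      = emeasure M (Z i -` (A \<inter> {z\<in>space data. fst (fst z) = k}) \<inter> space M)"
    by (rule emeasure_distr[OF measurable_Z[OF i]])
  also have "\<dots> = emeasure M {\<omega>\<in>space M. Z i \<omega> \<in> A \<and> label i \<omega> = k}"
    using measurable_space[OF measurable_Z[OF i]] by (intro arg_cong[where f="emeasure M"]) auto
  also have "\<dots> = ennreal (prob {\<omega>\<in>space M. Z i \<omega> \<in> A \<and> label i \<omega> = k})"
    by (rule emeasure_eq_measure)
  finally show ?thesis using prob_Z_in_group[OF i k A] by simp
qed

text \<open>Within group \<open>k\<close> the laws of all \<open>Z\<^sub>i\<close> are multiples of \<open>Pk k\<close>, so two data points with
  the same label can be exchanged.\<close>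
lemma measure_Z_law_transpose:
  assumes jm: "j \<in> {1..n+1}" "m \<in> {1..n+1}" "j \<noteq> m" and g: "g j = g m" "g j \<in> {1..K}"
    and E: "E \<in> sets Z_law"
  shows "measure Z_law ((\<lambda>z. \<lambda>i\<in>{1..n+1}. z (Transposition.transpose j m i)) -` E \<inter> space Z_law \<inter> label_box g)
           = measure Z_law (E \<inter> label_box g)"
  unfolding measure_def label_box_def
proof (intro arg_cong[where f=enn2real] emeasure_PiM_transpose_on_box[where N=data])
  fix A A' assume A: "A \<in> sets data" and A': "A' \<in> sets data"
  show "emeasure (distr M data (Z j)) (A \<inter> {z\<in>space data. fst (fst z) = g j}) *
        emeasure (distr M data (Z m)) (A' \<inter> {z\<in>space data. fst (fst z) = g j}) =
        emeasure (distr M data (Z j)) (A' \<inter> {z\<in>space data. fst (fst z) = g j}) *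
        emeasure (distr M data (Z m)) (A \<inter> {z\<in>space data. fst (fst z) = g j})"
    using jm g A A' label_law_nonneg
    by (simp add: emeasure_distr_Z_group ennreal_mult'[symmetric] mult_ac)
qed (use jm g E measurable_Z in \<open>auto intro: prob_space_distr\<close>)

lemma below_event_Int_test_label_event:
  assumes u: "u \<in> {1..n+1}"
  shows "below_event h u t \<inter> test_label_event k
           = (\<lambda>\<omega>. \<lambda>i\<in>{1..n+1}. Z i \<omega>) -`
               ({z\<in>space (PiM {1..n+1} (\<lambda>_. data)). mass_below (group_weight q n h) {1..n} (\<lambda>i. s (z i)) (s (z u)) < t}
                \<inter> label_box (h(n+1 := k))) \<inter> space M"
proof -
  have "mass_below (group_weight q n h) {1..n} (\<lambda>i. s ((\<lambda>i\<in>{1..n+1}. Z i \<omega>) i)) (s ((\<lambda>i\<in>{1..n+1}. Z i \<omega>) u))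
      = mass_below (group_weight q n h) {1..n} (\<lambda>i. score i \<omega>) (score u \<omega>)" for \<omega>
    using u unfolding mass_below_def by (intro sum.cong) auto
  moreover have "(\<lambda>i\<in>{1..n+1}. Z i \<omega>) \<in> space (PiM {1..n+1} (\<lambda>_. data))
      \<and> ((\<lambda>i\<in>{1..n+1}. Z i \<omega>) \<in> label_box (h(n+1 := k)) \<longleftrightarrow> (\<forall>i\<in>{1..n}. label i \<omega> = h i) \<and> label (n+1) \<omega> = k)"
    if "\<omega> \<in> space M" for \<omega>
    using measurable_space[OF measurable_Z that] by (auto simp: label_box_def space_PiM PiE_iff)
  ultimately show ?thesis by (auto simp: below_event_def test_label_event_def)
qed

text \<open>Exchanging the test point with a calibration point \<open>j\<close> of its group preserves the joint law
  given the labels, and changes the weighted mass below the test score by at most the weight of \<open>j\<close>.\<close>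
lemma prob_below_exchange:
  assumes h: "h \<in> label_configs" and j: "j \<in> {1..n}"
  shows "prob (below_event h j (t - max_group_weight K q n h) \<inter> test_label_event (h j))
           \<le> prob (below_event h (n+1) t \<inter> test_label_event (h j))"
proof -
  let ?P = "PiM {1..n+1} (\<lambda>_. data)"
  let ?Zv = "\<lambda>\<omega>. \<lambda>i\<in>{1..n+1}. Z i \<omega>"
  define \<sigma> where "\<sigma> z = (\<lambda>i\<in>{1..n+1}. z (Transposition.transpose j (n+1) i))" for z :: "nat \<Rightarrow> (nat \<times> 'x) \<times> 'y"
  define w where "w = group_weight q n h"
  define g where "g = h(n+1 := h j)"
  define E where "E u t = {z\<in>space ?P. mass_below w {1..n} (\<lambda>i. s (z i)) (s (z u)) < t}" for u t
  have jI: "j \<in> {1..n+1}" "n+1 \<in> {1..n+1}" "j \<noteq> n+1" using j by auto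
  have k: "h j \<in> {1..K}" using h j by (auto simp: PiE_iff)
  have E: "E u t \<in> sets ?P" if "u \<in> {1..n+1}" for u t
    unfolding E_def w_def using that by (intro sets_PiM_mass_below) auto
  have box: "label_box g \<in> sets ?P" unfolding label_box_def by (intro sets_PiM_I_finite) auto
  have event: "below_event h u t \<inter> test_label_event (h j) = ?Zv -` (E u t \<inter> label_box g) \<inter> space M"
    if "u \<in> {1..n+1}" for u t
    using below_event_Int_test_label_event[OF that] unfolding E_def w_def g_def .
  have "E j (t - max_group_weight K q n h) \<inter> label_box g \<subseteq> \<sigma> -` E (n+1) t \<inter> space Z_law \<inter> label_box g"
  proof
    fix z assume z: "z \<in> E j (t - max_group_weight K q n h) \<inter> label_box g"
    have "mass_below w {1..n} (\<lambda>i. s (\<sigma> z i)) (s (\<sigma> z (n+1)))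
        = mass_below w {1..n} (\<lambda>i. s (z (Transposition.transpose j (n+1) i))) (s (z j))"
      using jI unfolding mass_below_def \<sigma>_def by (intro sum.cong) auto
    also have "\<dots> \<le> mass_below w {1..n} (\<lambda>i. s (z i)) (s (z j)) + w j"
      using j group_weight_nonneg[where h=h and i=j, OF q_nonneg k] by (intro mass_below_transpose_le) (auto simp: w_def)
    also have "w j \<le> max_group_weight K q n h" unfolding w_def using j k by (rule group_weight_le_max)
    finally have "\<sigma> z \<in> E (n+1) t"
      using z measurable_space[OF measurable_PiM_transpose[OF jI(1,2), of "\<lambda>_. data"]]
      by (fastforce simp: E_def \<sigma>_def)
    then show "z \<in> \<sigma> -` E (n+1) t \<inter> space Z_law \<inter> label_box g" using z space_Z_law by (auto simp: E_def)
  qed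
  moreover have "\<sigma> \<in> measurable ?P ?P" unfolding \<sigma>_def using jI(1,2) by (rule measurable_PiM_transpose) simp
  then have "\<sigma> -` E (n+1) t \<inter> space Z_law \<inter> label_box g \<in> sets Z_law"
    using E[OF jI(2)] box unfolding sets_Z_law space_Z_law by (intro sets.Int measurable_sets)
  ultimately have "measure Z_law (E j (t - max_group_weight K q n h) \<inter> label_box g)
      \<le> measure Z_law (\<sigma> -` E (n+1) t \<inter> space Z_law \<inter> label_box g)"
    by (rule finite_measure.finite_measure_mono[OF finite_measure_Z_law])
  also have "\<dots> = measure Z_law (E (n+1) t \<inter> label_box g)"
    unfolding \<sigma>_def using jI k E[OF jI(2)] sets_Z_law by (intro measure_Z_law_transpose) (auto simp: g_def)
  finally show ?thesis using jI E box by (simp only: event prob_Z_vimage sets.Int)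
qed

lemma group_weight_calib_nonneg: "h \<in> label_configs \<Longrightarrow> \<forall>i\<in>{1..n}. group_weight q n h i \<ge> 0"
  using q_nonneg by (auto simp: PiE_iff intro!: group_weight_nonneg[OF q_nonneg])

text \<open>Averaging the exchange over the \<open>n\<^sub>k\<close> calibration points of group \<open>k\<close>: each carries
  weight \<open>q\<^sub>k / n\<^sub>k\<close>, and \<open>q\<^sub>k\<close> is the probability that the independent test point falls in group \<open>k\<close>.\<close>
lemma group_weighted_prob_below_le:
  assumes h: "h \<in> label_configs" and k: "k \<in> {1..K}"
  shows "(\<Sum>j\<in>{j\<in>{1..n}. h j = k}. group_weight q n h j * prob (below_event h j (t - max_group_weight K q n h)))
           \<le> prob (below_event h (n+1) t \<inter> test_label_event k)"
    (is "(\<Sum>j\<in>?G. _) \<le> ?P")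
proof (cases "?G = {}")
  case False
  define N where "N = real (grp_count n h k)"
  have N: "N = real (card ?G)" "N > 0"
    using False by (auto simp: N_def grp_count_def card_gt_0_iff)
  have "group_weight q n h j * prob (below_event h j (t - max_group_weight K q n h)) \<le> ?P / N"
    if "j \<in> ?G" for j
  proof -
    have j: "j \<in> {1..n}" "h j = k" using that by auto
    have "group_weight q n h j * prob (below_event h j (t - max_group_weight K q n h))
        = prob (below_event h j (t - max_group_weight K q n h) \<inter> test_label_event k) / N"
      unfolding prob_below_and_test_label[OF j(1) k] by (simp add: group_weight_def N_def j(2))
    also have "\<dots> \<le> ?P / N"
      using prob_below_exchange[OF h j(1), of t] N(2) unfolding j(2) by (intro divide_right_mono) auto
    finally show ?thesis .
  qed
  then have "(\<Sum>j\<in>?G. group_weight q n h j * prob (below_event h j (t - max_group_weight K q n h))) \<le> (\<Sum>j\<in>?G. ?P / N)"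
    by (rule sum_mono)
  also have "\<dots> = N * (?P / N)" by (simp only: sum_constant N(1))
  also have "\<dots> = ?P" using N(2) by simp
  finally show ?thesis .
next
  case True
  then show ?thesis by (simp only: sum.empty measure_nonneg)
qed

lemma weighted_prob_below_ge:
  assumes h: "h \<in> label_configs" and t: "t \<le> (\<Sum>i\<in>{1..n}. group_weight q n h i)"
  shows "t * prob (calib_labels_event h) \<le> (\<Sum>j\<in>{1..n}. group_weight q n h j * prob (below_event h j t))"
proof -
  let ?w = "group_weight q n h"
  have w: "\<forall>i\<in>{1..n}. ?w i \<ge> 0" using h by (rule group_weight_calib_nonneg)
  have int_below: "integrable M (\<lambda>\<omega>. ?w j * indicator (below_event h j t) \<omega>)" if "j \<in> {1..n}" for j
    using below_event_sets[of j] that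
    by (intro integrable_mult_right integrable_real_indicator) (auto simp: less_top[symmetric])
  have "t * prob (calib_labels_event h) = (\<integral>\<omega>. t * indicator (calib_labels_event h) \<omega> \<partial>M)"
    using calib_labels_event_sets by simp
  also have "\<dots> \<le> (\<integral>\<omega>. (\<Sum>j\<in>{1..n}. ?w j * indicator (below_event h j t) \<omega>) \<partial>M)"
  proof (rule integral_mono)
    show "integrable M (\<lambda>\<omega>. t * indicator (calib_labels_event h) \<omega>)"
      using calib_labels_event_sets
      by (intro integrable_mult_right integrable_real_indicator) (auto simp: less_top[symmetric])
    show "integrable M (\<lambda>\<omega>. \<Sum>j\<in>{1..n}. ?w j * indicator (below_event h j t) \<omega>)"
      using int_below by (rule Bochner_Integration.integrable_sum)
    fix \<omega> assume \<omega>: "\<omega> \<in> space M"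
    show "t * indicator (calib_labels_event h) \<omega> \<le> (\<Sum>j\<in>{1..n}. ?w j * indicator (below_event h j t) \<omega>)"
    proof (cases "\<omega> \<in> calib_labels_event h")
      case True
      then have "(\<Sum>j\<in>{1..n}. ?w j * indicator (below_event h j t) \<omega>)
          = (\<Sum>j\<in>{1..n}. if mass_below ?w {1..n} (\<lambda>i. score i \<omega>) (score j \<omega>) < t then ?w j else 0)"
        by (intro sum.cong) (auto simp: below_event_def calib_labels_event_def indicator_def)
      moreover have "t \<le> \<dots>" using w t by (intro weight_of_low_rank_ge) auto
      ultimately show ?thesis using True by simp
    next
      case False
      then show ?thesis using w by (auto intro: sum_nonneg)
    qed
  qed
  also have "\<dots> = (\<Sum>j\<in>{1..n}. ?w j * prob (below_event h j t))"
    using int_below below_event_sets by (subst Bochner_Integration.integral_sum) auto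
  finally show ?thesis .
qed

text \<open>If the weights of the nonempty groups sum to less than \<open>t\<close>, coverage is certain.\<close>
lemma prob_below_test_ge:
  assumes h: "h \<in> label_configs" and t: "t \<le> 1"
  shows "(t - max_group_weight K q n h) * prob (calib_labels_event h) \<le> prob (below_event h (n+1) t)"
proof -
  let ?w = "group_weight q n h"
  let ?c = "max_group_weight K q n h"
  have w: "\<forall>i\<in>{1..n}. ?w i \<ge> 0" using h by (rule group_weight_calib_nonneg)
  show ?thesis
  proof (cases "(\<Sum>i\<in>{1..n}. ?w i) < t")
    case True
    have "below_event h (n+1) t = calib_labels_event h"
      using le_less_trans[OF mass_below_le_sum[OF w] True]
      by (auto simp: below_event_def calib_labels_event_def)
    moreover have "t - ?c \<le> 1" using t max_group_weight_nonneg[of K q n h] by simp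
    ultimately show ?thesis using mult_right_mono[of "t - ?c" 1 "prob (calib_labels_event h)"] by simp
  next
    case False
    have "(t - ?c) * prob (calib_labels_event h) \<le> (\<Sum>j\<in>{1..n}. ?w j * prob (below_event h j (t - ?c)))"
      using False max_group_weight_nonneg[of K q n h] by (intro weighted_prob_below_ge[OF h]) auto
    also have "\<dots> = (\<Sum>k\<in>{1..K}. \<Sum>j\<in>{j\<in>{1..n}. h j = k}. ?w j * prob (below_event h j (t - ?c)))"
      using h by (intro sum.group[symmetric]) (auto simp: PiE_iff)
    also have "\<dots> \<le> (\<Sum>k\<in>{1..K}. prob (below_event h (n+1) t \<inter> test_label_event k))"
      using h by (intro sum_mono group_weighted_prob_below_le) auto
    also have "\<dots> = prob (\<Union>k\<in>{1..K}. below_event h (n+1) t \<inter> test_label_event k)"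
      using below_event_sets test_label_event_sets
      by (intro finite_measure_finite_Union[symmetric]) (auto simp: disjoint_family_on_def test_label_event_def)
    also have "\<dots> \<le> prob (below_event h (n+1) t)"
      using below_event_sets by (intro finite_measure_mono) auto
    finally show ?thesis .
  qed
qed

abbreviation coverage_event :: "real \<Rightarrow> 'o set" where
  "coverage_event \<alpha> \<equiv> {\<omega>\<in>space M. snd (Z (n+1) \<omega>) \<in> gwcp_set s K q \<alpha> n (\<lambda>i. Z i \<omega>) (fst (Z (n+1) \<omega>))}"

lemma coverage_iff:
  "snd (Z (n+1) \<omega>) \<in> gwcp_set s K q \<alpha> n (\<lambda>i. Z i \<omega>) (fst (Z (n+1) \<omega>))
     \<longleftrightarrow> gwcp_mixture K q n (\<lambda>i. label i \<omega>) (\<lambda>i. score i \<omega>) {y. y < ereal (score (n+1) \<omega>)} < 1 - \<alpha>"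
  unfolding gwcp_set_def gwcp_qhat_def using le_quantile_gwcp_mixture_iff[OF q_nonneg] by simp

lemma coverage_event_sets: "coverage_event \<alpha> \<in> events"
proof -
  have "(\<lambda>\<omega>. gwcp_mixture K q n (\<lambda>i. label i \<omega>) (\<lambda>i. score i \<omega>) {y. y < ereal (score (n+1) \<omega>)}) \<in> borel_measurable M"
    using measurable_label measurable_score by (intro borel_measurable_gwcp_mixture_below) auto
  then show ?thesis unfolding coverage_iff by measurable
qed

lemma coverage_Int_calib_labels_event:
  assumes h: "h \<in> label_configs"
  shows "coverage_event \<alpha> \<inter> calib_labels_event h = below_event h (n+1) (1 - \<alpha>)"
proof -
  have "gwcp_mixture K q n (\<lambda>i. label i \<omega>) (\<lambda>i. score i \<omega>) {y. y < ereal (score (n+1) \<omega>)}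
      = mass_below (group_weight q n h) {1..n} (\<lambda>i. score i \<omega>) (score (n+1) \<omega>)"
    if "\<forall>i\<in>{1..n}. label i \<omega> = h i" for \<omega>
  proof -
    have "\<forall>i\<in>{1..n}. label i \<omega> \<in> {1..K}" using that h by (auto simp: PiE_iff)
    then have "gwcp_mixture K q n (\<lambda>i. label i \<omega>) (\<lambda>i. score i \<omega>) {y. y < ereal (score (n+1) \<omega>)}
        = mass_below (group_weight q n (\<lambda>i. label i \<omega>)) {1..n} (\<lambda>i. score i \<omega>) (score (n+1) \<omega>)"
      by (rule gwcp_mixture_below)
    also have "\<dots> = mass_below (group_weight q n h) {1..n} (\<lambda>i. score i \<omega>) (score (n+1) \<omega>)"
      using that by (intro mass_below_cong) (auto intro: group_weight_cong)
    finally show ?thesis .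
  qed
  then have "\<omega> \<in> coverage_event \<alpha> \<inter> calib_labels_event h \<longleftrightarrow> \<omega> \<in> below_event h (n+1) (1 - \<alpha>)" for \<omega>
    using coverage_iff[of \<omega> \<alpha>] by (auto simp: below_event_def calib_labels_event_def)
  then show ?thesis by blast
qed

lemma calib_labels_event_iff:
  assumes h: "h \<in> extensional {1..n}" and \<omega>: "\<omega> \<in> space M"
  shows "\<omega> \<in> calib_labels_event h \<longleftrightarrow> (\<lambda>i\<in>{1..n}. label i \<omega>) = h"
proof
  assume "\<omega> \<in> calib_labels_event h"
  then show "(\<lambda>i\<in>{1..n}. label i \<omega>) = h"
    by (intro extensionalityI[where A="{1..n}", OF _ h]) (auto simp: calib_labels_event_def)
qed (use \<omega> in \<open>auto simp: calib_labels_event_def\<close>)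

lemma measurable_calib_labels:
  "(\<lambda>\<omega>. \<lambda>i\<in>{1..n}. label i \<omega>) \<in> measurable M (count_space (PiE {1..n} (\<lambda>_. UNIV)))"
proof -
  have "countable (PiE {1..n} (\<lambda>_. UNIV :: nat set))" by (intro countable_PiE) auto
  moreover have "(\<lambda>\<omega>. \<lambda>i\<in>{1..n}. label i \<omega>) -` {h} \<inter> space M \<in> events" if "h \<in> PiE {1..n} (\<lambda>_. UNIV)" for h
  proof -
    have "(\<lambda>\<omega>. \<lambda>i\<in>{1..n}. label i \<omega>) -` {h} \<inter> space M = calib_labels_event h"
      using that calib_labels_event_iff[of h] by (auto simp: PiE_iff calib_labels_event_def)
    then show ?thesis using calib_labels_event_sets by simp
  qed
  ultimately show ?thesis by (subst measurable_count_space_eq_countable) auto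
qed

text \<open>The integrand depends on \<open>\<omega>\<close> only through the calibration labels, which lie in
  \<open>label_configs\<close> almost surely.\<close>
lemma expectation_max_group_weight:
  "expectation (\<lambda>\<omega>. max_group_weight K q n (\<lambda>i. label i \<omega>))
     = (\<Sum>h\<in>label_configs. (\<Prod>i\<in>{1..n}. p (h i)) * max_group_weight K q n h)"
proof -
  define c where "c h = max_group_weight K q n h" for h
  define g where "g \<omega> = (\<Sum>h\<in>label_configs. c h * indicator (calib_labels_event h) \<omega>)" for \<omega>
  have c: "max_group_weight K q n (\<lambda>i. label i \<omega>) = c (\<lambda>i\<in>{1..n}. label i \<omega>)" for \<omega>
    unfolding c_def by (rule max_group_weight_cong) simp
  have "(\<lambda>\<omega>. c (\<lambda>i\<in>{1..n}. label i \<omega>)) \<in> borel_measurable M"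
    by (rule measurable_compose_countable'[where f="\<lambda>h \<omega>. c h", OF _ measurable_calib_labels])
      (auto intro: countable_PiE)
  moreover have "g \<in> borel_measurable M"
    unfolding g_def
  proof (rule borel_measurable_sum)
    fix h
    note [measurable] = calib_labels_event_sets[of h]
    show "(\<lambda>\<omega>. c h * indicator (calib_labels_event h) \<omega>) \<in> borel_measurable M" by measurable
  qed
  moreover have "AE \<omega> in M. c (\<lambda>i\<in>{1..n}. label i \<omega>) = g \<omega>"
    using AE_label_in_range AE_space
  proof eventually_elim
    case (elim \<omega>)
    then have labels: "(\<lambda>i\<in>{1..n}. label i \<omega>) \<in> label_configs" by (auto simp: PiE_iff)
    have "g \<omega> = (\<Sum>h\<in>label_configs. if (\<lambda>i\<in>{1..n}. label i \<omega>) = h then c h else 0)"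
      unfolding g_def using calib_labels_event_iff elim(2)
      by (intro sum.cong refl) (auto simp: indicator_def PiE_iff)
    also have "\<dots> = c (\<lambda>i\<in>{1..n}. label i \<omega>)" using labels by (simp add: finite_PiE)
    finally show ?case ..
  qed
  ultimately have "expectation (\<lambda>\<omega>. c (\<lambda>i\<in>{1..n}. label i \<omega>)) = expectation g" by (rule integral_cong_AE)
  also have "\<dots> = (\<Sum>h\<in>label_configs. c h * prob (calib_labels_event h))"
    unfolding g_def using calib_labels_event_sets
    by (subst Bochner_Integration.integral_sum) (auto simp: less_top[symmetric] intro!: integrable_real_indicator)
  also have "\<dots> = (\<Sum>h\<in>label_configs. (\<Prod>i\<in>{1..n}. p (h i)) * c h)"
    by (intro sum.cong refl) (simp add: prob_calib_labels_event)
  finally show ?thesis by (simp add: c c_def)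
qed

lemma disjoint_family_calib_labels_event: "disjoint_family_on calib_labels_event label_configs"
  unfolding disjoint_family_on_def
proof (intro ballI impI)
  fix h h' assume "h \<in> label_configs" "h' \<in> label_configs" "h \<noteq> h'"
  then obtain i where "i \<in> {1..n}" "h i \<noteq> h' i" using PiE_ext by metis
  then show "calib_labels_event h \<inter> calib_labels_event h' = {}" by (auto simp: calib_labels_event_def)
qed

lemma prob_coverage_ge:
  assumes "\<alpha> \<ge> 0"
  shows "prob (coverage_event \<alpha>) \<ge> 1 - \<alpha> - (\<Sum>h\<in>label_configs. (\<Prod>i\<in>{1..n}. p (h i)) * max_group_weight K q n h)"
proof -
  have total: "(\<Sum>h\<in>label_configs. prob (calib_labels_event h)) = 1"
  proof -
    have "(\<Sum>h\<in>label_configs. prob (calib_labels_event h)) = (\<Sum>h\<in>label_configs. \<Prod>i\<in>{1..n}. p (h i))"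
      by (intro sum.cong refl) (rule prob_calib_labels_event)
    also have "\<dots> = 1" using p_sum by (subst sum_PiE_prod) auto
    finally show ?thesis .
  qed
  have "1 - \<alpha> - (\<Sum>h\<in>label_configs. (\<Prod>i\<in>{1..n}. p (h i)) * max_group_weight K q n h)
      = (1 - \<alpha>) * (\<Sum>h\<in>label_configs. prob (calib_labels_event h))
        - (\<Sum>h\<in>label_configs. max_group_weight K q n h * prob (calib_labels_event h))"
    unfolding total by (simp add: prob_calib_labels_event mult.commute)
  also have "\<dots> = (\<Sum>h\<in>label_configs. (1 - \<alpha> - max_group_weight K q n h) * prob (calib_labels_event h))"
    by (simp add: left_diff_distrib sum_subtractf sum_distrib_left)
  also have "\<dots> \<le> (\<Sum>h\<in>label_configs. prob (coverage_event \<alpha> \<inter> calib_labels_event h))"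
  proof (rule sum_mono)
    fix h assume h: "h \<in> label_configs"
    have "1 - \<alpha> \<le> 1" using assms by simp
    from prob_below_test_ge[OF h this]
    show "(1 - \<alpha> - max_group_weight K q n h) * prob (calib_labels_event h)
        \<le> prob (coverage_event \<alpha> \<inter> calib_labels_event h)"
      unfolding coverage_Int_calib_labels_event[OF h] .
  qed
  also have "\<dots> = prob (\<Union>h\<in>label_configs. coverage_event \<alpha> \<inter> calib_labels_event h)"
  proof (rule finite_measure_finite_Union[symmetric])
    show "disjoint_family_on (\<lambda>h. coverage_event \<alpha> \<inter> calib_labels_event h) label_configs"
      by (rule disjoint_family_on_bisimulation[OF disjoint_family_calib_labels_event]) blast
  qed (use coverage_event_sets calib_labels_event_sets in \<open>auto simp: finite_PiE\<close>)
  also have "\<dots> \<le> prob (coverage_event \<alpha>)"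
    using coverage_event_sets by (intro finite_measure_mono) auto
  finally show ?thesis .
qed

end

theorem theorem2:
  fixes K n :: nat and p q :: "nat \<Rightarrow> real" and \<alpha> :: real
    and MX :: "'x measure" and MY :: "'y measure"
    and Pk :: "nat \<Rightarrow> ('x \<times> 'y) measure"
    and M :: "'o measure"
    and Z :: "nat \<Rightarrow> 'o \<Rightarrow> (nat \<times> 'x) \<times> 'y"
    and s :: "(nat \<times> 'x) \<times> 'y \<Rightarrow> real"
  assumes K: "K \<ge> 1"
    and p_nonneg: "\<forall>k\<in>{1..K}. p k \<ge> 0" and p_sum: "(\<Sum>k\<in>{1..K}. p k) = 1"
    and q_nonneg: "\<forall>k\<in>{1..K}. q k \<ge> 0" and q_sum: "(\<Sum>k\<in>{1..K}. q k) = 1"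
    and Pi_prob: "\<forall>k\<in>{1..K}. prob_space (Pk k)"
    and Pi_sets: "\<forall>k\<in>{1..K}. sets (Pk k) = sets (MX \<Otimes>\<^sub>M MY)"
    and alpha: "0 < \<alpha>" "\<alpha> < 1"
    and M: "prob_space M"
    and Z_meas: "\<forall>i\<in>{1..n+1}. Z i \<in> measurable M ((count_space UNIV \<Otimes>\<^sub>M MX) \<Otimes>\<^sub>M MY)"
    and Z_indep: "prob_space.indep_vars M (\<lambda>i. (count_space UNIV \<Otimes>\<^sub>M MX) \<Otimes>\<^sub>M MY) Z {1..n+1}"
    and Z_P: "\<forall>i\<in>{1..n}. \<forall>k\<in>{1..K}. \<forall>A\<in>sets (MX \<Otimes>\<^sub>M MY).
                measure M {\<omega>\<in>space M. fst (fst (Z i \<omega>)) = k \<and> (snd (fst (Z i \<omega>)), snd (Z i \<omega>)) \<in> A}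
                = p k * measure (Pk k) A"
    and Z_Q: "\<forall>k\<in>{1..K}. \<forall>A\<in>sets (MX \<Otimes>\<^sub>M MY).
                measure M {\<omega>\<in>space M. fst (fst (Z (n+1) \<omega>)) = k \<and> (snd (fst (Z (n+1) \<omega>)), snd (Z (n+1) \<omega>)) \<in> A}
                = q k * measure (Pk k) A"
    and s_meas: "s \<in> borel_measurable ((count_space UNIV \<Otimes>\<^sub>M MX) \<Otimes>\<^sub>M MY)"
  shows "measure M {\<omega>\<in>space M. snd (Z (n+1) \<omega>) \<in> gwcp_set s K q \<alpha> n (\<lambda>i. Z i \<omega>) (fst (Z (n+1) \<omega>))}
           \<ge> 1 - \<alpha> - prob_space.expectation M (\<lambda>\<omega>.
                 Max (insert 0 {q k / real (grp_count n (\<lambda>i. fst (fst (Z i \<omega>))) k) | k.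
                          k \<in> {1..K} \<and> grp_count n (\<lambda>i. fst (fst (Z i \<omega>))) k > 0}))
       \<and> (Min (p ` {1..K}) \<ge> 8 * ln (real n) / real n \<longrightarrow>
           measure M {\<omega>\<in>space M. snd (Z (n+1) \<omega>) \<in> gwcp_set s K q \<alpha> n (\<lambda>i. Z i \<omega>) (fst (Z (n+1) \<omega>))}
             \<ge> 1 - \<alpha> - 4 / real n * Max ((\<lambda>k. q k / p k) ` {1..K}))"
proof -
  interpret gwcp_model M K n p q MX MY Pk Z s
    using M p_sum q_sum Pi_prob Pi_sets Z_meas Z_indep Z_P Z_Q s_meas by (simp add: gwcp_model_def gwcp_model_axioms_def)
  have expectation: "expectation (\<lambda>\<omega>. Max (insert 0 {q k / real (grp_count n (\<lambda>i. fst (fst (Z i \<omega>))) k) | k.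
                          k \<in> {1..K} \<and> grp_count n (\<lambda>i. fst (fst (Z i \<omega>))) k > 0}))
      = (\<Sum>h\<in>label_configs. (\<Prod>i\<in>{1..n}. p (h i)) * max_group_weight K q n h)"
    using expectation_max_group_weight unfolding max_group_weight_def .
  have coverage: "prob (coverage_event \<alpha>) \<ge> 1 - \<alpha> - (\<Sum>h\<in>label_configs. (\<Prod>i\<in>{1..n}. p (h i)) * max_group_weight K q n h)"
    using alpha by (intro prob_coverage_ge) simp
  show ?thesis
  proof (intro conjI impI)
    assume "Min (p ` {1..K}) \<ge> 8 * ln (real n) / real n"
    then have "(\<Sum>h\<in>label_configs. (\<Prod>i\<in>{1..n}. p (h i)) * max_group_weight K q n h)
        \<le> 4 / real n * Max ((\<lambda>k. q k / p k) ` {1..K})"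
      by (rule expected_max_group_weight_le[OF K p_nonneg p_sum q_nonneg])
    then show "prob (coverage_event \<alpha>) \<ge> 1 - \<alpha> - 4 / real n * Max ((\<lambda>k. q k / p k) ` {1..K})"
      using coverage by linarith
  qed (use coverage expectation in simp)
qed

end
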